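(* Let $(G,X,\alpha)$ be a $G$-space with transitive action $\alpha$. Then there exist a $G$-space $(H,X,\gamma)$ with transitive action $\gamma$ such that $$\chi(H)\le\chi(X)\cdot\mathrm{inv}(G),\quad \mathrm{ib}(H)\le\mathrm{ib}(G),\quad w(H)\le\chi(X)\cdot\mathrm{ib}(G),$$ and an equivariant pair of maps $(\varphi,\mathrm{id}):(G,X,\alpha)\to(H,X,\gamma)$ with $\varphi$ an epimorphism.
   Context: All spaces are Tychonoff and all maps continuous. A $G$-space $(G,X,\alpha)$ is a topological group with a continuous action on $X$; transitive means $Gx=X$. An equivariant pair $(\varphi,\mathrm{id})$ is a continuous homomorphism $\varphi:G\to H$ with $\alpha(g,x)=\gamma(\varphi(g),x)$. The index of narrowness $\mathrm{ib}(G)$ is the least infinite cardinal $\tau$ such that for every neighborhood $U$ of the unit there is $A\subset G$ with $|A|\le\tau$ and $AU=G$. The invariance number $\mathrm{inv}(G)$ is the least infinite cardinal $\tau$ such that for every neighborhood $U$ of the unit there is a family $\gamma$ of at most $\tau$ neighborhoods of the unit such that for each $x\in G$ some $V\in\gamma$ satisfies $xVx^{-1}\subset U$. *)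

theory Defs
  imports "HOL-Analysis.Analysis" "HOL-Algebra.Coset"
begin

definition card_le :: "'x set \<Rightarrow> 'y set \<Rightarrow> bool" where
  "card_le A K \<longleftrightarrow> (card_of A, card_of K) \<in> ordLeq"

definition tychonoff_space :: "'a topology \<Rightarrow> bool" where
  "tychonoff_space T \<longleftrightarrow> t1_space T \<and> completely_regular_space T"

definition topological_group :: "('g, 'b) monoid_scheme \<Rightarrow> 'g topology \<Rightarrow> bool" where
  "topological_group G T \<longleftrightarrow>
     group G \<and> topspace T = carrier G \<and>
     continuous_map (prod_topology T T) T (\<lambda>(x, y). x \<otimes>\<^bsub>G\<^esub> y) \<and>
     continuous_map T T (\<lambda>x. inv\<^bsub>G\<^esub> x)"

definition unit_nbhd :: "('g, 'b) monoid_scheme \<Rightarrow> 'g topology \<Rightarrow> 'g set \<Rightarrow> bool" where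
  "unit_nbhd G T U \<longleftrightarrow> U \<subseteq> topspace T \<and> (\<exists>W. openin T W \<and> \<one>\<^bsub>G\<^esub> \<in> W \<and> W \<subseteq> U)"

definition G_space ::
  "('g, 'b) monoid_scheme \<Rightarrow> 'g topology \<Rightarrow> 'a topology \<Rightarrow> ('g \<Rightarrow> 'a \<Rightarrow> 'a) \<Rightarrow> bool" where
  "G_space G TG X \<alpha> \<longleftrightarrow>
     topological_group G TG \<and> tychonoff_space TG \<and> tychonoff_space X \<and>
     continuous_map (prod_topology TG X) X (\<lambda>(g, x). \<alpha> g x) \<and>
     (\<forall>x\<in>topspace X. \<alpha> \<one>\<^bsub>G\<^esub> x = x) \<and>
     (\<forall>g\<in>carrier G. \<forall>h\<in>carrier G. \<forall>x\<in>topspace X.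
        \<alpha> (g \<otimes>\<^bsub>G\<^esub> h) x = \<alpha> g (\<alpha> h x))"

definition transitive_action :: "('g, 'b) monoid_scheme \<Rightarrow> 'a topology \<Rightarrow> ('g \<Rightarrow> 'a \<Rightarrow> 'a) \<Rightarrow> bool" where
  "transitive_action G X \<alpha> \<longleftrightarrow> (\<forall>x\<in>topspace X. (\<lambda>g. \<alpha> g x) ` carrier G = topspace X)"

definition equivariant_pair ::
  "('g, 'b) monoid_scheme \<Rightarrow> 'g topology \<Rightarrow> ('h, 'c) monoid_scheme \<Rightarrow> 'h topology \<Rightarrow>
   'a topology \<Rightarrow> ('g \<Rightarrow> 'a \<Rightarrow> 'a) \<Rightarrow> ('h \<Rightarrow> 'a \<Rightarrow> 'a) \<Rightarrow> ('g \<Rightarrow> 'h) \<Rightarrow> bool" where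
  "equivariant_pair G TG H TH X \<alpha> \<gamma> \<phi> \<longleftrightarrow>
     \<phi> \<in> hom G H \<and> continuous_map TG TH \<phi> \<and>
     (\<forall>g\<in>carrier G. \<forall>x\<in>topspace X. \<alpha> g x = \<gamma> (\<phi> g) x)"

text \<open>Each invariant is the least infinite cardinal with a property; we express
  "invariant \<le> |K|" as: K is infinite and |K| has the property.\<close>

definition local_base_at :: "'a topology \<Rightarrow> 'a \<Rightarrow> 'a set set \<Rightarrow> bool" where
  "local_base_at T x \<B> \<longleftrightarrow>
     (\<forall>B\<in>\<B>. openin T B \<and> x \<in> B) \<and>
     (\<forall>U. openin T U \<and> x \<in> U \<longrightarrow> (\<exists>B\<in>\<B>. B \<subseteq> U))"

definition character_le :: "'a topology \<Rightarrow> 'k set \<Rightarrow> bool" where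
  "character_le T K \<longleftrightarrow> infinite K \<and>
     (\<forall>x\<in>topspace T. \<exists>\<B>. local_base_at T x \<B> \<and> card_le \<B> K)"

definition weight_le :: "'a topology \<Rightarrow> 'k set \<Rightarrow> bool" where
  "weight_le T K \<longleftrightarrow> infinite K \<and>
     (\<exists>\<B>. (\<forall>B\<in>\<B>. openin T B) \<and>
          (\<forall>U. openin T U \<longrightarrow> (\<exists>\<C>\<subseteq>\<B>. \<Union>\<C> = U)) \<and> card_le \<B> K)"

definition ib_le :: "('g, 'b) monoid_scheme \<Rightarrow> 'g topology \<Rightarrow> 'k set \<Rightarrow> bool" where
  "ib_le G T K \<longleftrightarrow> infinite K \<and>
     (\<forall>U. unit_nbhd G T U \<longrightarrow>
        (\<exists>A. A \<subseteq> carrier G \<and> card_le A K \<and> A <#>\<^bsub>G\<^esub> U = carrier G))"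

definition inv_le :: "('g, 'b) monoid_scheme \<Rightarrow> 'g topology \<Rightarrow> 'k set \<Rightarrow> bool" where
  "inv_le G T K \<longleftrightarrow> infinite K \<and>
     (\<forall>U. unit_nbhd G T U \<longrightarrow>
        (\<exists>\<gamma>. (\<forall>V\<in>\<gamma>. unit_nbhd G T V) \<and> card_le \<gamma> K \<and>
             (\<forall>x\<in>carrier G. \<exists>V\<in>\<gamma>. (x <#\<^bsub>G\<^esub> V) #>\<^bsub>G\<^esub> (inv\<^bsub>G\<^esub> x) \<subseteq> U)))"

end

theory Submission
  imports Defs
begin

text \<open>H is the quotient G/N by the intersection N of a family \<V> of open unit neighbourhoods
  that is closed under intersection, inversion, chosen cube roots and chosen conjugation covers,
  and that contains, for each O of a minimal local base at a point x0 of X, a unit neighbourhood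
  W with W O' \<subseteq> O for a neighbourhood O' of x0. Then N fixes x0; being normal, it fixes every
  point of the transitive space X, so the action descends to H. The translates g V with V \<in> \<V>
  induce a group topology on H whose character is at most |\<V>| \<le> chi(X) inv(G); it is T1, and
  a Birkhoff--Kakutani pseudonorm built from \<V> makes it Tychonoff. Images of sets A with
  A U = G give ib(H) \<le> ib(G), and the translates a V, with a ranging over such sets for the
  roots of V, form a base, so w(H) \<le> |\<V>| ib(G), where inv(G) \<le> ib(G).\<close>

unbundle cardinal_syntax

section \<open>Cardinal arithmetic\<close>

lemma ex_card_of_minimal:
  assumes "P F0"
  shows "\<exists>F. P F \<and> (\<forall>F'. P F' \<longrightarrow> |F| \<le>o |F'| )"
proof -
  obtain r where r: "r \<in> card_of ` Collect P" "\<And>y. (y, r) \<in> ordLess \<Longrightarrow> y \<notin> card_of ` Collect P"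
    using wfE_min[OF wf_ordLess, of "|F0|" "card_of ` Collect P"] assms by blast
  then obtain F where F: "P F" "r = |F|" by blast
  have "|F| \<le>o |F'|" if "P F'" for F'
    using r(2)[of "|F'|"] that F(2) ordLess_or_ordLeq[OF card_of_Well_order card_of_Well_order] by blast
  with F(1) show ?thesis by blast
qed

lemma card_of_Un_ordLeq_infinite:
  "infinite C \<Longrightarrow> |A| \<le>o |C| \<Longrightarrow> |B| \<le>o |C| \<Longrightarrow> |A \<union> B| \<le>o |C|"
  by (rule card_of_Un_ordLeq_infinite_Field) (simp_all add: Field_card_of card_of_Card_order card_of_card_order_on)

lemma card_of_Times_ordLeq_infinite:
  "infinite C \<Longrightarrow> |A| \<le>o |C| \<Longrightarrow> |B| \<le>o |C| \<Longrightarrow> |A \<times> B| \<le>o |C|"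
  by (rule card_of_Times_ordLeq_infinite_Field) (simp_all add: Field_card_of card_of_Card_order card_of_card_order_on)

lemma card_of_image_ordLeq: "|A| \<le>o |C| \<Longrightarrow> |f ` A| \<le>o |C|"
  using ordLeq_transitive[OF card_of_image] by blast

lemma card_of_insert_ordLeq_infinite: "infinite C \<Longrightarrow> |A| \<le>o |C| \<Longrightarrow> |insert a A| \<le>o |C|"
  using card_of_Un_ordLeq_infinite[of C "{a}" A] card_of_singl_ordLeq[of C a] by fastforce

section \<open>Topological groups\<close>

lemma (in group) mult_inv_cancel_left: "x \<in> carrier G \<Longrightarrow> y \<in> carrier G \<Longrightarrow> x \<otimes> (inv x \<otimes> y) = y"
  by (simp add: m_assoc[symmetric])

text \<open>Write x = w^-1 a^-1 with a \<in> A and w \<in> W; then x (a W a^-1) x^-1 = w^-1 W w.\<close>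
lemma (in group) conjugate_translate_subset:
  assumes W: "W \<subseteq> carrier G" "\<forall>a\<in>W. inv a \<in> W" "\<forall>a\<in>W. \<forall>b\<in>W. \<forall>c\<in>W. a \<otimes> b \<otimes> c \<in> U"
    and A: "A \<subseteq> carrier G" "A <#> W = carrier G" and x: "x \<in> carrier G"
  shows "\<exists>a\<in>A. (x <# {z \<in> carrier G. inv a \<otimes> z \<otimes> inv (inv a) \<in> W}) #> inv x \<subseteq> U"
proof -
  have "inv x \<in> A <#> W" using A(2) x by simp
  then obtain a w where aw: "a \<in> A" "w \<in> W" "inv x = a \<otimes> w" unfolding set_mult_def by blast
  have ac: "a \<in> carrier G" and wc: "w \<in> carrier G" using aw A(1) W(1) by auto
  have x_eq: "x = inv w \<otimes> inv a"
    using aw(3) ac wc x by (metis inv_inv inv_mult_group)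
  have "y \<in> U" if y_mem: "y \<in> (x <# {z \<in> carrier G. inv a \<otimes> z \<otimes> inv (inv a) \<in> W}) #> inv x" for y
  proof -
    obtain z where "z \<in> carrier G" "inv a \<otimes> z \<otimes> inv (inv a) \<in> W" and y: "y = x \<otimes> z \<otimes> inv x"
      using y_mem unfolding l_coset_def r_coset_def by blast
    then have z: "z \<in> carrier G" "inv a \<otimes> z \<otimes> a \<in> W" using ac by auto
    have "inv w \<otimes> (inv a \<otimes> z \<otimes> a) \<otimes> w \<in> U" using W(2,3) aw(2) z(2) by blast
    moreover have "inv w \<otimes> (inv a \<otimes> z \<otimes> a) \<otimes> w = y"
      using y x_eq ac wc z(1) by (simp add: inv_mult_group m_assoc)
    ultimately show "y \<in> U" by simp
  qed
  then show ?thesis using aw(1) by blast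
qed

locale topgroup = group G for G (structure) +
  fixes T :: "'g topology"
  assumes topspace_eq: "topspace T = carrier G"
    and continuous_mult: "continuous_map (prod_topology T T) T (\<lambda>(x, y). x \<otimes> y)"
    and continuous_inv: "continuous_map T T (\<lambda>x. inv x)"

lemma topological_group_imp_topgroup: "topological_group G T \<Longrightarrow> topgroup G T"
  unfolding topological_group_def by (simp add: topgroup_def topgroup_axioms_def)

context topgroup
begin

lemma openin_subset_carrier: "openin T V \<Longrightarrow> V \<subseteq> carrier G"
  using openin_subset topspace_eq by blast

lemma continuous_map_left_mult:
  assumes "a \<in> carrier G"
  shows "continuous_map T T (\<lambda>x. a \<otimes> x)"
proof -
  have "continuous_map T (prod_topology T T) (\<lambda>x. (a, x))"
    using assms topspace_eq by (auto intro!: continuous_map_pairedI)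
  from continuous_map_compose[OF this continuous_mult] show ?thesis by (simp add: o_def)
qed

lemma continuous_map_right_mult:
  assumes "a \<in> carrier G"
  shows "continuous_map T T (\<lambda>x. x \<otimes> a)"
proof -
  have "continuous_map T (prod_topology T T) (\<lambda>x. (x, a))"
    using assms topspace_eq by (auto intro!: continuous_map_pairedI)
  from continuous_map_compose[OF this continuous_mult] show ?thesis by (simp add: o_def)
qed

lemma openin_preimage:
  "continuous_map T T f \<Longrightarrow> openin T V \<Longrightarrow> openin T {x \<in> carrier G. f x \<in> V}"
  using openin_continuous_map_preimage topspace_eq by metis

lemma openin_left_translate:
  assumes a: "a \<in> carrier G" and V: "openin T V"
  shows "openin T ((\<lambda>v. a \<otimes> v) ` V)"
proof -
  have "(\<lambda>v. a \<otimes> v) ` V = {x \<in> carrier G. inv a \<otimes> x \<in> V}"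
    using openin_subset_carrier[OF V] a
    by (force simp: m_assoc[symmetric] intro: image_eqI[of _ _ "inv a \<otimes> _"])
  then show ?thesis
    using openin_preimage[OF continuous_map_left_mult V] a by simp
qed

lemma openin_conjugate_preimage:
  "x \<in> carrier G \<Longrightarrow> openin T V \<Longrightarrow> openin T {w \<in> carrier G. x \<otimes> w \<otimes> inv x \<in> V}"
  using openin_preimage continuous_map_compose[OF continuous_map_left_mult continuous_map_right_mult]
  by (simp add: o_def)

lemma openin_inv_image:
  assumes V: "openin T V"
  shows "openin T ((\<lambda>v. inv v) ` V)"
proof -
  have "(\<lambda>v. inv v) ` V = {x \<in> carrier G. inv x \<in> V}"
    using openin_subset_carrier[OF V] by (auto intro!: image_eqI)
  then show ?thesis
    using openin_preimage[OF continuous_inv V] by simp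
qed

lemma open_unit_nbhd_square_root:
  assumes "openin T V" "\<one> \<in> V"
  shows "\<exists>W. openin T W \<and> \<one> \<in> W \<and> (\<forall>a\<in>W. \<forall>b\<in>W. a \<otimes> b \<in> V)"
proof -
  have "openin (prod_topology T T) {p \<in> topspace (prod_topology T T). (\<lambda>(x, y). x \<otimes> y) p \<in> V}"
    using openin_continuous_map_preimage[OF continuous_mult assms(1)] .
  moreover have "(\<one>, \<one>) \<in> {p \<in> topspace (prod_topology T T). (\<lambda>(x, y). x \<otimes> y) p \<in> V}"
    using assms topspace_eq by simp
  ultimately obtain A B where "openin T A" "openin T B" "\<one> \<in> A" "\<one> \<in> B"
      "A \<times> B \<subseteq> {p \<in> topspace (prod_topology T T). (\<lambda>(x, y). x \<otimes> y) p \<in> V}"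
    unfolding openin_prod_topology_alt by meson
  then show ?thesis
    by (intro exI[of _ "A \<inter> B"]) (auto intro: openin_Int)
qed

lemma open_unit_nbhd_symmetric_cube_root:
  assumes "openin T V" "\<one> \<in> V"
  shows "\<exists>W. openin T W \<and> \<one> \<in> W \<and> (\<forall>a\<in>W. inv a \<in> W) \<and>
             (\<forall>a\<in>W. \<forall>b\<in>W. \<forall>c\<in>W. a \<otimes> b \<otimes> c \<in> V)"
proof -
  obtain W1 where W1: "openin T W1" "\<one> \<in> W1" "\<forall>a\<in>W1. \<forall>b\<in>W1. a \<otimes> b \<in> V"
    using open_unit_nbhd_square_root[OF assms] by blast
  obtain W2 where W2: "openin T W2" "\<one> \<in> W2" "\<forall>a\<in>W2. \<forall>b\<in>W2. a \<otimes> b \<in> W1"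
    using open_unit_nbhd_square_root[OF W1(1,2)] by blast
  define W where "W = W1 \<inter> W2 \<inter> (\<lambda>v. inv v) ` (W1 \<inter> W2)"
  have W12: "openin T (W1 \<inter> W2)" using W1(1) W2(1) by (rule openin_Int)
  have "W1 \<inter> W2 \<subseteq> carrier G" using openin_subset_carrier[OF W12] .
  then have "(\<forall>a\<in>W. inv a \<in> W) \<and> \<one> \<in> W"
    unfolding W_def using W1(2) W2(2) by (force intro: image_eqI[of _ _ \<one>])
  moreover have "openin T W"
    unfolding W_def using W12 openin_inv_image[OF W12] by (rule openin_Int)
  moreover have "\<forall>a\<in>W. \<forall>b\<in>W. \<forall>c\<in>W. a \<otimes> b \<otimes> c \<in> V"
    unfolding W_def using W1(3) W2(3) by blast
  ultimately show ?thesis by blast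
qed

lemma open_unit_nbhd_imp_unit_nbhd: "openin T V \<Longrightarrow> \<one> \<in> V \<Longrightarrow> unit_nbhd G T V"
  unfolding unit_nbhd_def using openin_subset by blast

lemma ib_le_imp_inv_le:
  assumes ib: "ib_le G T L"
  shows "inv_le G T L"
  unfolding inv_le_def
proof (intro conjI allI impI)
  show "infinite L" using ib unfolding ib_le_def by blast
next
  fix U assume "unit_nbhd G T U"
  then obtain U0 where U0: "openin T U0" "\<one> \<in> U0" "U0 \<subseteq> U" unfolding unit_nbhd_def by blast
  obtain W where W: "openin T W" "\<one> \<in> W" "\<forall>a\<in>W. inv a \<in> W"
      "\<forall>a\<in>W. \<forall>b\<in>W. \<forall>c\<in>W. a \<otimes> b \<otimes> c \<in> U0"
    using open_unit_nbhd_symmetric_cube_root[OF U0(1,2)] by blast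
  obtain A where A: "A \<subseteq> carrier G" "card_le A L" "A <#> W = carrier G"
    using ib open_unit_nbhd_imp_unit_nbhd[OF W(1,2)] unfolding ib_le_def by blast
  define Z where "Z a = {z \<in> carrier G. inv a \<otimes> z \<otimes> inv (inv a) \<in> W}" for a
  have "unit_nbhd G T (Z a)" if "a \<in> A" for a
    using that A(1) W(2) openin_conjugate_preimage[of "inv a" W] W(1)
    by (intro open_unit_nbhd_imp_unit_nbhd) (auto simp: Z_def)
  moreover have "card_le (Z ` A) L"
    using A(2) unfolding card_le_def by (rule card_of_image_ordLeq)
  moreover have "\<exists>a\<in>A. (x <# Z a) #> inv x \<subseteq> U" if "x \<in> carrier G" for x
    using conjugate_translate_subset[OF openin_subset_carrier[OF W(1)] W(3,4) A(1,3) that] U0(3)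
    unfolding Z_def by blast
  ultimately show "\<exists>\<gamma>. (\<forall>V\<in>\<gamma>. unit_nbhd G T V) \<and> card_le \<gamma> L \<and>
                        (\<forall>x\<in>carrier G. \<exists>V\<in>\<gamma>. (x <# V) #> inv x \<subseteq> U)"
    by (intro exI[of _ "Z ` A"]) blast
qed

end

section \<open>The Birkhoff--Kakutani pseudonorm\<close>

lemma sum_list_split_halves:
  fixes w :: "'a \<Rightarrow> real"
  assumes nonneg: "\<And>x. 0 \<le> w x" and total: "sum_list (map w xs) \<le> 2 * c" and "xs \<noteq> []"
  shows "\<exists>ys x zs. xs = ys @ x # zs \<and> sum_list (map w ys) \<le> c \<and> sum_list (map w zs) \<le> c"
proof -
  let ?s = "\<lambda>ys. sum_list (map w ys)"
  have s_nonneg: "0 \<le> ?s ys" for ys by (induction ys) (auto intro: add_nonneg_nonneg nonneg)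
  have c_nonneg: "0 \<le> c" using s_nonneg[of xs] total by linarith
  define J where "J = {j. j < length xs \<and> ?s (take j xs) \<le> c}"
  have "0 \<in> J" unfolding J_def using assms(3) s_nonneg[of xs] total by simp
  moreover have "finite J" unfolding J_def by simp
  ultimately have j: "Max J \<in> J" and j_max: "\<And>i. i \<in> J \<Longrightarrow> i \<le> Max J"
    using Max_in Max_ge by blast+
  define j where "j = Max J"
  have xs_eq: "xs = take j xs @ xs ! j # drop (Suc j) xs"
    using j unfolding j_def J_def by (simp add: id_take_nth_drop)
  have "?s (drop (Suc j) xs) \<le> c"
  proof (cases "Suc j < length xs")
    case True
    have "Suc j \<notin> J" using j_max[of "Suc j"] unfolding j_def by linarith
    with True have "c < ?s (take (Suc j) xs)" unfolding J_def by auto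
    moreover have "?s xs = ?s (take (Suc j) xs) + ?s (drop (Suc j) xs)"
      by (metis append_take_drop_id map_append sum_list_append)
    ultimately show ?thesis using total by linarith
  qed (simp add: c_nonneg)
  with xs_eq j show ?thesis unfolding j_def J_def by blast
qed

text \<open>Birkhoff--Kakutani: such a chain carries a subadditive pseudonorm that is at most 2^-n on
  V n and below 1 only on V 0. It is the infimum of the weights sum 2^-n_i of the words
  v_1 ... v_m with v_i \<in> V n_i representing g, capped at 1.\<close>
locale nbhd_chain = group G for G (structure) +
  fixes V :: "nat \<Rightarrow> 'g set"
  assumes chain_subset: "V n \<subseteq> carrier G"
    and one_mem_chain: "\<one> \<in> V n"
    and chain_cube: "a \<in> V (Suc n) \<Longrightarrow> b \<in> V (Suc n) \<Longrightarrow> c \<in> V (Suc n) \<Longrightarrow> a \<otimes> b \<otimes> c \<in> V n"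
    and chain_inv: "a \<in> V (Suc n) \<Longrightarrow> inv a \<in> V (Suc n)"
begin

lemma chain_Suc_subset: "V (Suc n) \<subseteq> V n"
  using chain_cube[OF _ one_mem_chain one_mem_chain] chain_subset by fastforce

lemma chain_antimono: "n \<le> m \<Longrightarrow> V m \<subseteq> V n"
  by (induction m rule: dec_induct) (use chain_Suc_subset in auto)

definition word :: "(nat \<times> 'g) list \<Rightarrow> bool" where
  "word ws \<longleftrightarrow> (\<forall>p\<in>set ws. snd p \<in> V (fst p))"

definition word_prod :: "(nat \<times> 'g) list \<Rightarrow> 'g" where
  "word_prod ws = foldr (\<lambda>p acc. snd p \<otimes> acc) ws \<one>"

definition word_weight :: "(nat \<times> 'g) list \<Rightarrow> real" where
  "word_weight ws = sum_list (map (\<lambda>p. (1/2) ^ fst p) ws)"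

definition weights_of :: "'g \<Rightarrow> real set" where
  "weights_of g = insert 1 {word_weight ws | ws. word ws \<and> word_prod ws = g}"

definition pnorm :: "'g \<Rightarrow> real" where
  "pnorm g = Inf (weights_of g)"

lemma word_append [simp]: "word (xs @ ys) \<longleftrightarrow> word xs \<and> word ys"
  and word_Cons [simp]: "word (p # xs) \<longleftrightarrow> snd p \<in> V (fst p) \<and> word xs"
  and word_Nil [simp]: "word []"
  unfolding word_def by auto

lemma word_prod_closed: "word ws \<Longrightarrow> word_prod ws \<in> carrier G"
  by (induction ws) (use chain_subset in \<open>auto simp: word_prod_def\<close>)

lemma word_prod_append:
  "word xs \<Longrightarrow> word ys \<Longrightarrow> word_prod (xs @ ys) = word_prod xs \<otimes> word_prod ys"
proof (induction xs)
  case Nil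
  then show ?case using word_prod_closed by (simp add: word_prod_def[of "[]"])
next
  case (Cons p xs)
  have p: "snd p \<in> carrier G" using Cons.prems chain_subset by auto
  have "word_prod ((p # xs) @ ys) = snd p \<otimes> word_prod (xs @ ys)" by (simp add: word_prod_def)
  also have "\<dots> = snd p \<otimes> (word_prod xs \<otimes> word_prod ys)" using Cons by simp
  also have "\<dots> = word_prod (p # xs) \<otimes> word_prod ys"
    using p word_prod_closed Cons.prems by (simp add: word_prod_def m_assoc)
  finally show ?case .
qed

lemma word_prod_single: "v \<in> carrier G \<Longrightarrow> word_prod [(n, v)] = v"
  by (simp add: word_prod_def)

lemma word_weight_append: "word_weight (xs @ ys) = word_weight xs + word_weight ys"
  by (simp add: word_weight_def)

lemma word_weight_nonneg: "0 \<le> word_weight ws"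
  unfolding word_weight_def by (induction ws) auto

lemma word_weight_pos: "ws \<noteq> [] \<Longrightarrow> 0 < word_weight ws"
  by (cases ws) (auto simp: word_weight_def intro: add_pos_nonneg word_weight_nonneg[unfolded word_weight_def])

lemma word_split_halves:
  assumes "word_weight ws \<le> (1/2) ^ k" and "ws \<noteq> []"
  obtains A p B where "ws = A @ p # B"
    and "word_weight A \<le> (1/2) ^ Suc k" and "word_weight B \<le> (1/2) ^ Suc k"
proof -
  have "\<exists>A p B. ws = A @ p # B \<and> word_weight A \<le> (1/2) ^ Suc k \<and> word_weight B \<le> (1/2) ^ Suc k"
    unfolding word_weight_def
  proof (rule sum_list_split_halves)
    show "sum_list (map (\<lambda>p. (1/2) ^ fst p) ws) \<le> 2 * (1/2::real) ^ Suc k"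
      using assms(1) by (simp add: word_weight_def)
  qed (use assms(2) in simp_all)
  with that show ?thesis by blast
qed

lemma word_prod_split:
  assumes "word A" "snd p \<in> V (fst p)" "word B"
  shows "word_prod (A @ p # B) = word_prod A \<otimes> snd p \<otimes> word_prod B"
proof -
  have "word_prod (p # B) = snd p \<otimes> word_prod B" by (simp add: word_prod_def)
  then show ?thesis
    using assms chain_subset word_prod_closed word_prod_append[of A "p # B"]
    by (simp add: m_assoc subset_iff)
qed

text \<open>Split the word into halves of weight at most 2^-(k+1) around a middle letter; that letter
  has level > k unless it is the whole word.\<close>
lemma word_prod_mem_chain:
  "word ws \<Longrightarrow> word_weight ws \<le> (1/2) ^ k \<Longrightarrow> word_prod ws \<in> V k"
proof (induction "length ws" arbitrary: ws k rule: less_induct)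
  case less
  show ?case
  proof (cases "ws = []")
    case True then show ?thesis using one_mem_chain by (simp add: word_prod_def)
  next
    case False
    obtain A p B where split: "ws = A @ p # B"
      and wA: "word_weight A \<le> (1/2) ^ Suc k" and wB: "word_weight B \<le> (1/2) ^ Suc k"
      using less.prems(2) False by (rule word_split_halves)
    have A: "word A" and p: "snd p \<in> V (fst p)" and B: "word B"
      using less.prems(1) split by auto
    have weight: "word_weight ws = word_weight A + (1/2) ^ fst p + word_weight B"
      using split by (simp add: word_weight_def)
    show ?thesis
    proof (cases "A = [] \<and> B = []")
      case True
      then have ws: "ws = [p]" using split by simp
      then have "(1/2::real) ^ fst p \<le> (1/2) ^ k" using less.prems(2) by (simp add: word_weight_def)
      then have "k \<le> fst p" by (simp add: power_decreasing_iff)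
      then have "snd p \<in> V k" using p chain_antimono by blast
      moreover have "snd p \<in> carrier G" using p chain_subset by blast
      ultimately show ?thesis using ws by (simp add: word_prod_def)
    next
      case False
      then have "0 < word_weight A + word_weight B"
        using word_weight_pos[of A] word_weight_pos[of B] word_weight_nonneg[of A]
          word_weight_nonneg[of B] by linarith
      then have "(1/2::real) ^ fst p < (1/2) ^ k" using weight less.prems(2) by linarith
      then have "Suc k \<le> fst p" by (simp add: power_strict_decreasing_iff Suc_le_eq)
      then have "snd p \<in> V (Suc k)" using chain_antimono p by blast
      moreover have "word_prod A \<in> V (Suc k)" "word_prod B \<in> V (Suc k)"
        using less.hyps[OF _ A wA] less.hyps[OF _ B wB] split by auto
      ultimately show ?thesis
        using chain_cube word_prod_split[OF A p B] split by simp
    qed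
  qed
qed

lemma bdd_below_weights_of: "bdd_below (weights_of g)"
  using word_weight_nonneg by (auto simp: weights_of_def intro!: bdd_belowI[of _ 0])

lemma weights_of_nonneg: "r \<in> weights_of g \<Longrightarrow> 0 \<le> r"
  using word_weight_nonneg by (auto simp: weights_of_def)

lemma pnorm_le: "r \<in> weights_of g \<Longrightarrow> pnorm g \<le> r"
  unfolding pnorm_def using bdd_below_weights_of by (rule cInf_lower[rotated])

lemma le_pnorm: "(\<And>r. r \<in> weights_of g \<Longrightarrow> x \<le> r) \<Longrightarrow> x \<le> pnorm g"
  unfolding pnorm_def by (rule cInf_greatest) (auto simp: weights_of_def)

lemma pnorm_le_one: "pnorm g \<le> 1"
  by (rule pnorm_le) (simp add: weights_of_def)

lemma pnorm_nonneg: "0 \<le> pnorm g"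
  by (rule le_pnorm) (rule weights_of_nonneg)

lemma pnorm_le_word_weight: "word ws \<Longrightarrow> pnorm (word_prod ws) \<le> word_weight ws"
  by (rule pnorm_le) (auto simp: weights_of_def)

lemma pnorm_less_one_imp_mem: "pnorm g < 1 \<Longrightarrow> g \<in> V 0"
proof -
  assume "pnorm g < 1"
  then obtain r where "r \<in> weights_of g" "r < 1"
    unfolding pnorm_def using cInf_lessD[of "weights_of g" 1] by (auto simp: weights_of_def)
  then obtain ws where "word ws" "word_prod ws = g" "word_weight ws < 1"
    by (auto simp: weights_of_def)
  then show "g \<in> V 0" using word_prod_mem_chain[of ws 0] by simp
qed

lemma pnorm_chain_le:
  assumes "v \<in> V n"
  shows "pnorm v \<le> (1/2) ^ n"
proof -
  have "v \<in> carrier G" using assms chain_subset by blast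
  then have "pnorm v \<le> word_weight [(n, v)]"
    using pnorm_le_word_weight[of "[(n, v)]"] assms by (simp add: word_prod_single)
  then show ?thesis by (simp add: word_weight_def)
qed

lemma pnorm_eq_0: "(\<And>n. m \<in> V n) \<Longrightarrow> pnorm m = 0"
proof (rule antisym[OF _ pnorm_nonneg], rule ccontr)
  assume "\<And>n. m \<in> V n" and "\<not> pnorm m \<le> 0"
  moreover obtain n where "(1/2::real) ^ n < pnorm m"
    using real_arch_pow_inv[of "pnorm m" "1/2"] \<open>\<not> pnorm m \<le> 0\<close> by auto
  ultimately show False using pnorm_chain_le[of m n] by simp
qed

lemma pnorm_mult_le:
  assumes "g \<in> carrier G" "h \<in> carrier G"
  shows "pnorm (g \<otimes> h) \<le> pnorm g + pnorm h"
proof -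
  have sum: "pnorm (g \<otimes> h) \<le> r + s" if r: "r \<in> weights_of g" and s: "s \<in> weights_of h" for r s
  proof (cases "r = 1 \<or> s = 1")
    case True
    then show ?thesis
      using weights_of_nonneg[OF r] weights_of_nonneg[OF s] pnorm_le_one[of "g \<otimes> h"] by auto
  next
    case False
    then obtain xs ys where "word xs" "word_prod xs = g" "r = word_weight xs"
        "word ys" "word_prod ys = h" "s = word_weight ys"
      using r s by (auto simp: weights_of_def)
    then show ?thesis
      using pnorm_le_word_weight[of "xs @ ys"] by (simp add: word_prod_append word_weight_append)
  qed
  have "pnorm (g \<otimes> h) - s \<le> pnorm g" if "s \<in> weights_of h" for s
    using sum[OF _ that] by (intro le_pnorm) (simp add: algebra_simps)
  then have "pnorm (g \<otimes> h) - pnorm g \<le> pnorm h"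
    by (intro le_pnorm) (simp add: algebra_simps)
  then show ?thesis by simp
qed

lemma pnorm_mult_diff_le:
  assumes x: "x \<in> carrier G" and y: "y \<in> carrier G"
  shows "\<bar>pnorm (x \<otimes> y) - pnorm x\<bar> \<le> max (pnorm y) (pnorm (inv y))"
proof -
  have "pnorm x = pnorm ((x \<otimes> y) \<otimes> inv y)" using x y by (simp add: m_assoc)
  also have "\<dots> \<le> pnorm (x \<otimes> y) + pnorm (inv y)" using x y by (intro pnorm_mult_le) simp_all
  finally show ?thesis using pnorm_mult_le[OF x y] by linarith
qed

end

section \<open>Quotient by a neighbourhood system\<close>

lemma continuous_map_pointwiseI:
  assumes "\<And>x. x \<in> topspace X \<Longrightarrow> f x \<in> topspace Y"
    and "\<And>x U. x \<in> topspace X \<Longrightarrow> openin Y U \<Longrightarrow> f x \<in> U \<Longrightarrow>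
           \<exists>W. openin X W \<and> x \<in> W \<and> (\<forall>y\<in>W. f y \<in> U)"
  shows "continuous_map X Y f"
  using assms by (auto simp: continuous_map_eq_topcontinuous_at topcontinuous_at_def)

text \<open>The axioms of a base at the unit of a coarser group topology. Its kernel N is a normal
  subgroup, and the translates g V induce a group topology on G/N.\<close>
locale nbhd_system = topgroup G T for G (structure) and T +
  fixes \<V> :: "'g set set"
  assumes openin_nbhd: "V \<in> \<V> \<Longrightarrow> openin T V"
    and one_mem_nbhd: "V \<in> \<V> \<Longrightarrow> \<one> \<in> V"
    and nbhd_Int: "A \<in> \<V> \<Longrightarrow> B \<in> \<V> \<Longrightarrow> A \<inter> B \<in> \<V>"
    and nbhd_inv_image: "V \<in> \<V> \<Longrightarrow> (\<lambda>v. inv v) ` V \<in> \<V>"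
    and nbhd_cube_root: "V \<in> \<V> \<Longrightarrow> \<exists>W\<in>\<V>. \<forall>a\<in>W. \<forall>b\<in>W. \<forall>c\<in>W. a \<otimes> b \<otimes> c \<in> V"
    and nbhd_conjugate: "V \<in> \<V> \<Longrightarrow> x \<in> carrier G \<Longrightarrow> \<exists>W\<in>\<V>. \<forall>w\<in>W. x \<otimes> w \<otimes> inv x \<in> V"
    and carrier_nbhd: "carrier G \<in> \<V>"
begin

lemma nbhd_subset: "V \<in> \<V> \<Longrightarrow> V \<subseteq> carrier G"
  using openin_subset_carrier openin_nbhd by blast

lemma nbhd_mem_carrier: "V \<in> \<V> \<Longrightarrow> v \<in> V \<Longrightarrow> v \<in> carrier G"
  using nbhd_subset by blast

lemma ex_symmetric_cube_root:
  assumes "V \<in> \<V>"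
  shows "\<exists>W. W \<in> \<V> \<and> (\<forall>a\<in>W. inv a \<in> W) \<and> (\<forall>a\<in>W. \<forall>b\<in>W. \<forall>c\<in>W. a \<otimes> b \<otimes> c \<in> V)"
proof -
  obtain W0 where W0: "W0 \<in> \<V>" "\<forall>a\<in>W0. \<forall>b\<in>W0. \<forall>c\<in>W0. a \<otimes> b \<otimes> c \<in> V"
    using nbhd_cube_root[OF assms] by blast
  have "W0 \<inter> (\<lambda>v. inv v) ` W0 \<in> \<V>" using W0(1) nbhd_Int nbhd_inv_image by blast
  moreover have "\<forall>a\<in>W0 \<inter> (\<lambda>v. inv v) ` W0. inv a \<in> W0 \<inter> (\<lambda>v. inv v) ` W0"
    using nbhd_mem_carrier[OF W0(1)] by (auto intro!: image_eqI)
  ultimately show ?thesis using W0(2) by blast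
qed

definition nbhd_root :: "'g set \<Rightarrow> 'g set" where
  "nbhd_root V = (SOME W. W \<in> \<V> \<and> (\<forall>a\<in>W. inv a \<in> W) \<and> (\<forall>a\<in>W. \<forall>b\<in>W. \<forall>c\<in>W. a \<otimes> b \<otimes> c \<in> V))"

lemma nbhd_root:
  assumes "V \<in> \<V>"
  shows "nbhd_root V \<in> \<V> \<and> (\<forall>a\<in>nbhd_root V. inv a \<in> nbhd_root V) \<and>
    (\<forall>a\<in>nbhd_root V. \<forall>b\<in>nbhd_root V. \<forall>c\<in>nbhd_root V. a \<otimes> b \<otimes> c \<in> V)"
  unfolding nbhd_root_def by (rule someI_ex) (rule ex_symmetric_cube_root[OF assms])

lemma nbhd_root_nbhd: "V \<in> \<V> \<Longrightarrow> nbhd_root V \<in> \<V>"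
  and nbhd_root_inv: "V \<in> \<V> \<Longrightarrow> a \<in> nbhd_root V \<Longrightarrow> inv a \<in> nbhd_root V"
  and nbhd_root_cube: "V \<in> \<V> \<Longrightarrow> a \<in> nbhd_root V \<Longrightarrow> b \<in> nbhd_root V \<Longrightarrow> c \<in> nbhd_root V \<Longrightarrow>
    a \<otimes> b \<otimes> c \<in> V"
  using nbhd_root by blast+

lemma nbhd_root_square:
  assumes "V \<in> \<V>" "a \<in> nbhd_root V" "b \<in> nbhd_root V"
  shows "a \<otimes> b \<in> V"
  using nbhd_root_cube[OF assms one_mem_nbhd[OF nbhd_root_nbhd[OF assms(1)]]]
    nbhd_mem_carrier[OF nbhd_root_nbhd] assms by simp

lemma nbhd_root_subset:
  assumes "V \<in> \<V>"
  shows "nbhd_root V \<subseteq> V"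
proof
  fix a assume a: "a \<in> nbhd_root V"
  have "a \<otimes> \<one> \<in> V" using nbhd_root_square[OF assms a one_mem_nbhd[OF nbhd_root_nbhd[OF assms]]] .
  then show "a \<in> V" using nbhd_mem_carrier[OF nbhd_root_nbhd[OF assms] a] by simp
qed

definition N :: "'g set" where "N = \<Inter>\<V>"

lemma N_subset_nbhd: "V \<in> \<V> \<Longrightarrow> N \<subseteq> V"
  unfolding N_def by blast

lemma N_subset_carrier: "N \<subseteq> carrier G"
  using N_subset_nbhd carrier_nbhd by blast

lemma normal_N: "N \<lhd> G"
proof -
  have "subgroup N G"
  proof
    show "N \<subseteq> carrier G" by (rule N_subset_carrier)
    show "\<one> \<in> N" unfolding N_def using one_mem_nbhd by blast
  next
    fix a b assume "a \<in> N" "b \<in> N"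
    then show "a \<otimes> b \<in> N"
      unfolding N_def using nbhd_root_square nbhd_root_nbhd N_subset_nbhd by blast
  next
    fix a assume a: "a \<in> N"
    have "inv a \<in> V" if V: "V \<in> \<V>" for V
    proof -
      obtain v where "v \<in> V" "a = inv v" using a N_subset_nbhd[OF nbhd_inv_image[OF V]] by blast
      then show ?thesis using nbhd_mem_carrier[OF V] by simp
    qed
    then show "inv a \<in> N" unfolding N_def by blast
  qed
  moreover have "x \<otimes> h \<otimes> inv x \<in> N" if "x \<in> carrier G" "h \<in> N" for x h
    unfolding N_def using nbhd_conjugate that N_subset_nbhd by blast
  ultimately show ?thesis unfolding normal_inv_iff by blast
qed

lemma subgroup_N: "subgroup N G"
  using normal_N normal_imp_subgroup by blast

abbreviation H where "H \<equiv> G Mod N"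

definition proj :: "'g \<Rightarrow> 'g set" where "proj a = N #> a"

lemma group_H: "group H"
  using normal.factorgroup_is_group[OF normal_N] .

lemma proj_hom: "proj \<in> hom G H"
  unfolding proj_def using normal.r_coset_hom_Mod[OF normal_N] .

lemma carrier_H: "carrier H = proj ` carrier G"
  unfolding proj_def carrier_FactGroup by simp

lemma carrier_H_elem: "C \<in> carrier H \<Longrightarrow> \<exists>g\<in>carrier G. C = proj g"
  unfolding carrier_H by blast

lemma proj_closed: "a \<in> carrier G \<Longrightarrow> proj a \<in> carrier H"
  using carrier_H by blast

lemma proj_mult: "a \<in> carrier G \<Longrightarrow> b \<in> carrier G \<Longrightarrow> proj a \<otimes>\<^bsub>H\<^esub> proj b = proj (a \<otimes> b)"
  using proj_hom by (simp add: hom_mult)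

lemma proj_one: "proj \<one> = \<one>\<^bsub>H\<^esub>"
  unfolding proj_def using coset_mult_one[OF N_subset_carrier] by simp

lemma proj_inv: "a \<in> carrier G \<Longrightarrow> inv\<^bsub>H\<^esub> (proj a) = proj (inv a)"
  using group_hom.hom_inv[of G H proj a] proj_hom group_H
  by (simp add: group_hom_def group_hom_axioms_def is_group)

lemma proj_eq_iff:
  assumes a: "a \<in> carrier G" and b: "b \<in> carrier G"
  shows "proj a = proj b \<longleftrightarrow> inv a \<otimes> b \<in> N"
proof
  assume "proj a = proj b"
  then have "b \<otimes> inv a \<in> N"
    using rcos_self[OF b subgroup_N] subgroup.rcos_module_imp[OF subgroup_N is_group a]
    unfolding proj_def by simp
  then have "inv a \<otimes> (b \<otimes> inv a) \<otimes> inv (inv a) \<in> N"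
    using normal_N a unfolding normal_inv_iff by blast
  then show "inv a \<otimes> b \<in> N" using a b by (simp add: m_assoc)
next
  assume m: "inv a \<otimes> b \<in> N"
  then have "a \<otimes> (inv a \<otimes> b) \<otimes> inv a \<in> N" using normal_N a unfolding normal_inv_iff by blast
  then have "b \<in> N #> a"
    using subgroup.rcos_module_rev[OF subgroup_N is_group a] a b by (simp add: m_assoc[symmetric])
  then show "proj a = proj b" unfolding proj_def using repr_independence[OF _ a subgroup_N] by simp
qed

definition lift :: "'g set \<Rightarrow> 'g" where
  "lift C = (SOME g. g \<in> carrier G \<and> proj g = C)"

lemma lift:
  assumes "C \<in> carrier H"
  shows "lift C \<in> carrier G \<and> proj (lift C) = C"
proof -
  have "\<exists>g. g \<in> carrier G \<and> proj g = C" using assms carrier_H by auto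
  then show ?thesis unfolding lift_def by (rule someI_ex)
qed

lemma lift_proj:
  assumes a: "a \<in> carrier G"
  shows "\<exists>m\<in>N. lift (proj a) = a \<otimes> m"
proof
  have l: "lift (proj a) \<in> carrier G" "proj (lift (proj a)) = proj a" using lift[OF proj_closed[OF a]] by auto
  then show "inv a \<otimes> lift (proj a) \<in> N" using proj_eq_iff[OF a l(1)] by simp
  show "lift (proj a) = a \<otimes> (inv a \<otimes> lift (proj a))" using a l(1) by (simp add: m_assoc[symmetric])
qed


definition coarse_open :: "'g set \<Rightarrow> bool" where
  "coarse_open S \<longleftrightarrow> S \<subseteq> carrier G \<and> (\<forall>g\<in>S. \<exists>V\<in>\<V>. \<forall>v\<in>V. g \<otimes> v \<in> S)"

definition coarse_interior :: "'g set \<Rightarrow> 'g set" where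
  "coarse_interior S = {g \<in> carrier G. \<exists>V\<in>\<V>. \<forall>v\<in>V. g \<otimes> v \<in> S}"

definition TH :: "'g set topology" where
  "TH = topology (\<lambda>U. U \<subseteq> carrier H \<and> coarse_open (carrier G \<inter> proj -` U))"

definition basic_nbhd :: "'g \<Rightarrow> 'g set \<Rightarrow> 'g set set" where
  "basic_nbhd g V = proj ` coarse_interior ((\<lambda>v. g \<otimes> v) ` V)"

lemma istopology_TH: "istopology (\<lambda>U. U \<subseteq> carrier H \<and> coarse_open (carrier G \<inter> proj -` U))"
  unfolding istopology_def
proof (rule conjI; intro allI impI)
  fix S U assume S: "S \<subseteq> carrier H \<and> coarse_open (carrier G \<inter> proj -` S)"
    and U: "U \<subseteq> carrier H \<and> coarse_open (carrier G \<inter> proj -` U)"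
  have "\<exists>V\<in>\<V>. \<forall>v\<in>V. g \<otimes> v \<in> carrier G \<inter> proj -` (S \<inter> U)"
    if g: "g \<in> carrier G \<inter> proj -` (S \<inter> U)" for g
  proof -
    obtain V1 where V1: "V1 \<in> \<V>" "\<forall>v\<in>V1. g \<otimes> v \<in> carrier G \<inter> proj -` S"
      using S g unfolding coarse_open_def by blast
    obtain V2 where V2: "V2 \<in> \<V>" "\<forall>v\<in>V2. g \<otimes> v \<in> carrier G \<inter> proj -` U"
      using U g unfolding coarse_open_def by blast
    have "V1 \<inter> V2 \<in> \<V>" using V1(1) V2(1) by (rule nbhd_Int)
    moreover have "\<forall>v\<in>V1 \<inter> V2. g \<otimes> v \<in> carrier G \<inter> proj -` (S \<inter> U)"
      using V1(2) V2(2) by blast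
    ultimately show ?thesis ..
  qed
  moreover have "S \<inter> U \<subseteq> carrier H" using S by blast
  ultimately show "S \<inter> U \<subseteq> carrier H \<and> coarse_open (carrier G \<inter> proj -` (S \<inter> U))"
    unfolding coarse_open_def by blast
next
  fix \<K> assume K: "\<forall>U\<in>\<K>. U \<subseteq> carrier H \<and> coarse_open (carrier G \<inter> proj -` U)"
  have "\<exists>V\<in>\<V>. \<forall>v\<in>V. g \<otimes> v \<in> carrier G \<inter> proj -` \<Union>\<K>"
    if g: "g \<in> carrier G \<inter> proj -` \<Union>\<K>" for g
  proof -
    obtain U where U: "U \<in> \<K>" "g \<in> carrier G \<inter> proj -` U" using g by blast
    then obtain V where "V \<in> \<V>" "\<forall>v\<in>V. g \<otimes> v \<in> carrier G \<inter> proj -` U"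
      using K unfolding coarse_open_def by blast
    then show ?thesis using U(1) by blast
  qed
  moreover have "\<Union>\<K> \<subseteq> carrier H" using K by blast
  ultimately show "\<Union>\<K> \<subseteq> carrier H \<and> coarse_open (carrier G \<inter> proj -` \<Union>\<K>)"
    unfolding coarse_open_def by blast
qed

lemma openin_TH: "openin TH U \<longleftrightarrow> U \<subseteq> carrier H \<and> coarse_open (carrier G \<inter> proj -` U)"
  unfolding TH_def using topology_inverse'[OF istopology_TH] by simp

lemma topspace_TH: "topspace TH = carrier H"
proof -
  have "carrier G \<inter> proj -` carrier H = carrier G" using proj_closed by blast
  then have "openin TH (carrier H)"
    unfolding openin_TH coarse_open_def using carrier_nbhd nbhd_mem_carrier by auto
  then have "carrier H \<subseteq> topspace TH" by (rule openin_subset)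
  moreover have "topspace TH \<subseteq> carrier H" using openin_topspace[of TH] unfolding openin_TH ..
  ultimately show ?thesis by blast
qed

lemma coarse_open_saturated:
  assumes S: "coarse_open S" and s: "s \<in> S" and s': "s' \<in> carrier G" and eq: "proj s' = proj s"
  shows "s' \<in> S"
proof -
  have sc: "s \<in> carrier G" using S s unfolding coarse_open_def by blast
  obtain V where V: "V \<in> \<V>" "\<forall>v\<in>V. s \<otimes> v \<in> S" using S s unfolding coarse_open_def by blast
  have "inv s \<otimes> s' \<in> N" using proj_eq_iff[OF sc s'] eq by simp
  then have "s \<otimes> (inv s \<otimes> s') \<in> S" using V N_subset_nbhd by blast
  then show ?thesis using sc s' by (simp add: m_assoc[symmetric])
qed

lemma openin_TH_image:
  assumes S: "coarse_open S"
  shows "openin TH (proj ` S)"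
proof -
  have Sc: "S \<subseteq> carrier G" using S unfolding coarse_open_def by blast
  have "carrier G \<inter> proj -` proj ` S = S"
  proof (intro equalityI subsetI)
    fix x assume "x \<in> carrier G \<inter> proj -` proj ` S"
    then obtain s where "s \<in> S" "x \<in> carrier G" "proj x = proj s" by auto
    then show "x \<in> S" using coarse_open_saturated[OF S] by blast
  qed (use Sc in blast)
  then show ?thesis unfolding openin_TH using S Sc proj_closed by auto
qed

lemma coarse_open_interior: "coarse_open (coarse_interior S)"
  unfolding coarse_open_def
proof (intro conjI ballI)
  show "coarse_interior S \<subseteq> carrier G" unfolding coarse_interior_def by blast
next
  fix g assume "g \<in> coarse_interior S"
  then obtain V where V: "V \<in> \<V>" "\<forall>v\<in>V. g \<otimes> v \<in> S" and g: "g \<in> carrier G"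
    unfolding coarse_interior_def by blast
  have "g \<otimes> w \<in> coarse_interior S" if w: "w \<in> nbhd_root V" for w
  proof -
    have wc: "w \<in> carrier G" using nbhd_mem_carrier[OF nbhd_root_nbhd[OF V(1)] w] .
    have "g \<otimes> w \<otimes> u \<in> S" if u: "u \<in> nbhd_root V" for u
      using V(2) nbhd_root_square[OF V(1) w u] g wc nbhd_mem_carrier[OF nbhd_root_nbhd[OF V(1)] u]
      by (simp add: m_assoc)
    then show ?thesis unfolding coarse_interior_def using g wc nbhd_root_nbhd[OF V(1)] by blast
  qed
  then show "\<exists>W\<in>\<V>. \<forall>w\<in>W. g \<otimes> w \<in> coarse_interior S" using nbhd_root_nbhd[OF V(1)] by blast
qed

lemma coarse_open_imp_openin: "coarse_open S \<Longrightarrow> openin T S"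
proof (subst openin_subopen, intro ballI)
  fix g assume S: "coarse_open S" and "g \<in> S"
  then obtain V where V: "V \<in> \<V>" "\<forall>v\<in>V. g \<otimes> v \<in> S" and g: "g \<in> carrier G"
    unfolding coarse_open_def by blast
  have "openin T ((\<lambda>v. g \<otimes> v) ` V)" using openin_left_translate[OF g openin_nbhd[OF V(1)]] .
  moreover have "g \<in> (\<lambda>v. g \<otimes> v) ` V" using one_mem_nbhd[OF V(1)] g by force
  ultimately show "\<exists>U. openin T U \<and> g \<in> U \<and> U \<subseteq> S" using V(2) by blast
qed

lemma openin_basic_nbhd: "openin TH (basic_nbhd g V)"
  unfolding basic_nbhd_def using openin_TH_image coarse_open_interior by blast

lemma proj_mem_basic_nbhd: "g \<in> carrier G \<Longrightarrow> V \<in> \<V> \<Longrightarrow> proj g \<in> basic_nbhd g V"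
  unfolding basic_nbhd_def coarse_interior_def by blast

lemma coarse_interior_subset: "coarse_interior S \<subseteq> S"
proof
  fix g assume "g \<in> coarse_interior S"
  then obtain V where "V \<in> \<V>" "\<forall>v\<in>V. g \<otimes> v \<in> S" "g \<in> carrier G"
    unfolding coarse_interior_def by blast
  then have "g \<otimes> \<one> \<in> S" using one_mem_nbhd by blast
  then show "g \<in> S" using \<open>g \<in> carrier G\<close> by simp
qed

lemma basic_nbhd_elem:
  assumes "C \<in> basic_nbhd g V"
  shows "\<exists>v\<in>V. C = proj (g \<otimes> v)"
proof -
  obtain x where x: "x \<in> coarse_interior ((\<lambda>v. g \<otimes> v) ` V)" "C = proj x"
    using assms unfolding basic_nbhd_def by blast
  then obtain v where "v \<in> V" "x = g \<otimes> v" using coarse_interior_subset by blast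
  then show ?thesis using x(2) by blast
qed

lemma openin_TH_nbhd:
  assumes U: "openin TH U" and g: "g \<in> carrier G" and gU: "proj g \<in> U"
  shows "\<exists>V\<in>\<V>. \<forall>v\<in>V. proj (g \<otimes> v) \<in> U"
proof -
  have "coarse_open (carrier G \<inter> proj -` U)" using U unfolding openin_TH by blast
  moreover have "g \<in> carrier G \<inter> proj -` U" using g gU by blast
  ultimately obtain V where "V \<in> \<V>" "\<forall>v\<in>V. g \<otimes> v \<in> carrier G \<inter> proj -` U"
    unfolding coarse_open_def by blast
  then show ?thesis by blast
qed

lemma basic_nbhd_subset:
  assumes "openin TH U" "g \<in> carrier G" "proj g \<in> U"
  shows "\<exists>V\<in>\<V>. basic_nbhd g V \<subseteq> U"
proof -
  obtain V where V: "V \<in> \<V>" "\<forall>v\<in>V. proj (g \<otimes> v) \<in> U"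
    using openin_TH_nbhd[OF assms] by blast
  have "basic_nbhd g V \<subseteq> U"
  proof
    fix C assume "C \<in> basic_nbhd g V"
    then obtain v where "v \<in> V" "C = proj (g \<otimes> v)" using basic_nbhd_elem by blast
    then show "C \<in> U" using V(2) by simp
  qed
  then show ?thesis using V(1) by blast
qed

lemma continuous_map_proj: "continuous_map T TH proj"
  unfolding continuous_map_def
proof (intro conjI allI impI)
  show "proj \<in> topspace T \<rightarrow> topspace TH" using proj_closed topspace_eq topspace_TH by auto
next
  fix U assume "openin TH U"
  then have "openin T (carrier G \<inter> proj -` U)"
    unfolding openin_TH using coarse_open_imp_openin by blast
  moreover have "carrier G \<inter> proj -` U = {x \<in> topspace T. proj x \<in> U}" using topspace_eq by auto
  ultimately show "openin T {x \<in> topspace T. proj x \<in> U}" by simp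
qed


lemma H_mult_closed: "C \<in> carrier H \<Longrightarrow> D \<in> carrier H \<Longrightarrow> C \<otimes>\<^bsub>H\<^esub> D \<in> carrier H"
  by (rule monoid.m_closed[OF group.is_monoid[OF group_H]])

lemma topspace_prod_TH_elem:
  assumes "p \<in> topspace (prod_topology TH TH)"
  obtains g h where "g \<in> carrier G" and "h \<in> carrier G" and "p = (proj g, proj h)"
proof -
  obtain C D where CD: "p = (C, D)" by (cases p)
  then have "C \<in> carrier H" "D \<in> carrier H" using assms topspace_TH by auto
  then obtain g h where "g \<in> carrier G" "C = proj g" "h \<in> carrier G" "D = proj h"
    using carrier_H_elem by meson
  then show ?thesis using that CD by simp
qed

text \<open>g v h w = g h (h^-1 v h) w, and h^-1 v h is small when v is.\<close>
lemma ex_nbhd_mult_absorb: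
  assumes V: "V \<in> \<V>" and g: "g \<in> carrier G" and h: "h \<in> carrier G"
  shows "\<exists>W\<in>\<V>. \<forall>v\<in>W. \<forall>w\<in>W. \<exists>u\<in>V. (g \<otimes> v) \<otimes> (h \<otimes> w) = g \<otimes> h \<otimes> u"
proof -
  obtain V2 where V2: "V2 \<in> \<V>" "\<forall>w\<in>V2. inv h \<otimes> w \<otimes> inv (inv h) \<in> nbhd_root V"
    using nbhd_conjugate[OF nbhd_root_nbhd[OF V]] h by blast
  have "\<exists>u\<in>V. (g \<otimes> v) \<otimes> (h \<otimes> w) = g \<otimes> h \<otimes> u"
    if v: "v \<in> nbhd_root V \<inter> V2" and w: "w \<in> nbhd_root V \<inter> V2" for v w
  proof
    have vc: "v \<in> carrier G" and wc: "w \<in> carrier G"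
      using v w nbhd_mem_carrier[OF nbhd_root_nbhd[OF V]] by auto
    have "inv h \<otimes> v \<otimes> h \<in> nbhd_root V" using V2(2) v h by auto
    then show "inv h \<otimes> v \<otimes> h \<otimes> w \<in> V" using nbhd_root_square[OF V] w by blast
    show "(g \<otimes> v) \<otimes> (h \<otimes> w) = g \<otimes> h \<otimes> (inv h \<otimes> v \<otimes> h \<otimes> w)"
      using g h vc wc by (simp add: m_assoc mult_inv_cancel_left)
  qed
  moreover have "nbhd_root V \<inter> V2 \<in> \<V>" using nbhd_root_nbhd[OF V] V2(1) by (rule nbhd_Int)
  ultimately show ?thesis by blast
qed

lemma continuous_map_H_mult: "continuous_map (prod_topology TH TH) TH (\<lambda>(x, y). x \<otimes>\<^bsub>H\<^esub> y)"
proof (rule continuous_map_pointwiseI)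
  fix p assume "p \<in> topspace (prod_topology TH TH)"
  then obtain g h where "g \<in> carrier G" "h \<in> carrier G" "p = (proj g, proj h)"
    by (rule topspace_prod_TH_elem)
  then show "(\<lambda>(x, y). x \<otimes>\<^bsub>H\<^esub> y) p \<in> topspace TH"
    using proj_mult proj_closed topspace_TH by simp
next
  fix p U assume p: "p \<in> topspace (prod_topology TH TH)" and U: "openin TH U"
    and pU: "(\<lambda>(x, y). x \<otimes>\<^bsub>H\<^esub> y) p \<in> U"
  obtain g h where g: "g \<in> carrier G" and h: "h \<in> carrier G" and p_eq: "p = (proj g, proj h)"
    using p by (rule topspace_prod_TH_elem)
  have "proj (g \<otimes> h) \<in> U" using pU p_eq proj_mult[OF g h] by simp
  then obtain V where V: "V \<in> \<V>" "\<forall>u\<in>V. proj (g \<otimes> h \<otimes> u) \<in> U"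
    using openin_TH_nbhd[OF U] g h by blast
  obtain W where W: "W \<in> \<V>" "\<forall>v\<in>W. \<forall>w\<in>W. \<exists>u\<in>V. (g \<otimes> v) \<otimes> (h \<otimes> w) = g \<otimes> h \<otimes> u"
    using ex_nbhd_mult_absorb[OF V(1) g h] by blast
  have "(\<lambda>(x, y). x \<otimes>\<^bsub>H\<^esub> y) q \<in> U" if q: "q \<in> basic_nbhd g W \<times> basic_nbhd h W" for q
  proof -
    obtain C' D' where q_eq: "q = (C', D')" "C' \<in> basic_nbhd g W" "D' \<in> basic_nbhd h W"
      using q by blast
    obtain v w where vw: "v \<in> W" "w \<in> W" "q = (proj (g \<otimes> v), proj (h \<otimes> w))"
      using q_eq basic_nbhd_elem[OF q_eq(2)] basic_nbhd_elem[OF q_eq(3)] by blast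
    have vc: "v \<in> carrier G" and wc: "w \<in> carrier G" using W vw nbhd_mem_carrier by auto
    obtain u where "u \<in> V" "(g \<otimes> v) \<otimes> (h \<otimes> w) = g \<otimes> h \<otimes> u" using W(2) vw by blast
    then have "proj ((g \<otimes> v) \<otimes> (h \<otimes> w)) \<in> U" using V(2) by simp
    then show ?thesis using vw(3) proj_mult g h vc wc by simp
  qed
  moreover have "openin (prod_topology TH TH) (basic_nbhd g W \<times> basic_nbhd h W)"
    using openin_basic_nbhd openin_basic_nbhd
    by (rule openin_prod_Times_iff[THEN iffD2, OF disjI2, OF disjI2, OF conjI])
  moreover have "p \<in> basic_nbhd g W \<times> basic_nbhd h W"
    using p_eq proj_mem_basic_nbhd g h W by simp
  ultimately show "\<exists>W. openin (prod_topology TH TH) W \<and> p \<in> W \<and> (\<forall>q\<in>W. (\<lambda>(x, y). x \<otimes>\<^bsub>H\<^esub> y) q \<in> U)"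
    by blast
qed

lemma continuous_map_H_inv: "continuous_map TH TH (\<lambda>x. inv\<^bsub>H\<^esub> x)"
proof (rule continuous_map_pointwiseI)
  fix C assume "C \<in> topspace TH"
  then show "inv\<^bsub>H\<^esub> C \<in> topspace TH" using topspace_TH group.inv_closed[OF group_H] by simp
next
  fix C U assume C: "C \<in> topspace TH" and U: "openin TH U" and CU: "inv\<^bsub>H\<^esub> C \<in> U"
  obtain g where g: "g \<in> carrier G" "C = proj g" using C topspace_TH carrier_H_elem by auto
  have "proj (inv g) \<in> U" using CU g proj_inv by simp
  then obtain V where V: "V \<in> \<V>" "\<forall>v\<in>V. proj (inv g \<otimes> v) \<in> U"
    using openin_TH_nbhd[OF U] g by blast
  obtain V2 where V2: "V2 \<in> \<V>" "\<forall>w\<in>V2. g \<otimes> w \<otimes> inv g \<in> V"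
    using nbhd_conjugate[OF V(1)] g by blast
  define W where "W = (\<lambda>v. inv v) ` V2"
  have W: "W \<in> \<V>" unfolding W_def using nbhd_inv_image V2(1) by blast
  have "inv\<^bsub>H\<^esub> D \<in> U" if D: "D \<in> basic_nbhd g W" for D
  proof -
    obtain u where u: "u \<in> V2" "D = proj (g \<otimes> inv u)"
      using basic_nbhd_elem[OF D] unfolding W_def by blast
    have uc: "u \<in> carrier G" using nbhd_mem_carrier V2(1) u(1) by blast
    have "proj (inv g \<otimes> (g \<otimes> u \<otimes> inv g)) \<in> U" using V V2 u by blast
    moreover have "inv g \<otimes> (g \<otimes> u \<otimes> inv g) = inv (g \<otimes> inv u)"
      using g uc by (simp add: m_assoc[symmetric] inv_mult_group)
    ultimately show ?thesis using u(2) proj_inv g uc by simp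
  qed
  then show "\<exists>W. openin TH W \<and> C \<in> W \<and> (\<forall>D\<in>W. inv\<^bsub>H\<^esub> D \<in> U)"
    using openin_basic_nbhd proj_mem_basic_nbhd[OF g(1) W] g(2) by blast
qed

lemma topological_group_H: "topological_group H TH"
  unfolding topological_group_def
  using group_H topspace_TH continuous_map_H_mult continuous_map_H_inv by blast

lemma t1_space_TH: "t1_space TH"
  unfolding t1_space_def
proof (intro ballI impI)
  fix C D assume C: "C \<in> topspace TH" and D: "D \<in> topspace TH" and ne: "C \<noteq> D"
  obtain g where g: "g \<in> carrier G" "C = proj g" using C topspace_TH carrier_H_elem by auto
  obtain h where h: "h \<in> carrier G" "D = proj h" using D topspace_TH carrier_H_elem by auto
  have "inv g \<otimes> h \<notin> N" using proj_eq_iff g h ne by blast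
  then obtain V where V: "V \<in> \<V>" "inv g \<otimes> h \<notin> V" unfolding N_def by blast
  have W: "nbhd_root V \<in> \<V>" using nbhd_root_nbhd[OF V(1)] .
  have "D \<notin> basic_nbhd g (nbhd_root V)"
  proof
    assume "D \<in> basic_nbhd g (nbhd_root V)"
    then obtain w where w: "w \<in> nbhd_root V" "proj h = proj (g \<otimes> w)"
      using basic_nbhd_elem h by blast
    have wc: "w \<in> carrier G" using nbhd_mem_carrier W w(1) by blast
    have "inv (g \<otimes> w) \<otimes> h \<in> N" using proj_eq_iff[of "g \<otimes> w" h] w g h wc by simp
    then have "inv (g \<otimes> w) \<otimes> h \<in> nbhd_root V" using N_subset_nbhd W by blast
    then have "w \<otimes> (inv (g \<otimes> w) \<otimes> h) \<in> V" using nbhd_root_square[OF V(1) w(1)] by blast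
    moreover have "w \<otimes> (inv (g \<otimes> w) \<otimes> h) = inv g \<otimes> h"
      using g h wc by (simp add: inv_mult_group m_assoc[symmetric])
    ultimately show False using V(2) by simp
  qed
  then show "\<exists>U. openin TH U \<and> C \<in> U \<and> D \<notin> U"
    using openin_basic_nbhd proj_mem_basic_nbhd[OF g(1) W] g(2) by blast
qed


definition root_chain :: "'g set \<Rightarrow> nat \<Rightarrow> 'g set" where
  "root_chain V n = (nbhd_root ^^ n) V"

lemma root_chain_nbhd: "V \<in> \<V> \<Longrightarrow> root_chain V n \<in> \<V>"
  by (induction n) (simp_all add: root_chain_def nbhd_root_nbhd)

lemma root_chain_Suc: "root_chain V (Suc n) = nbhd_root (root_chain V n)"
  by (simp add: root_chain_def)

lemma nbhd_chain_root_chain: "V \<in> \<V> \<Longrightarrow> nbhd_chain G (root_chain V)"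
proof unfold_locales
  fix n assume V: "V \<in> \<V>"
  show "root_chain V n \<subseteq> carrier G" using nbhd_subset root_chain_nbhd[OF V] .
  show "\<one> \<in> root_chain V n" using one_mem_nbhd root_chain_nbhd[OF V] .
next
  fix a b c n assume "V \<in> \<V>" "a \<in> root_chain V (Suc n)" "b \<in> root_chain V (Suc n)"
    "c \<in> root_chain V (Suc n)"
  then show "a \<otimes> b \<otimes> c \<in> root_chain V n"
    using nbhd_root_cube[OF root_chain_nbhd] by (simp add: root_chain_Suc)
next
  fix a n assume "V \<in> \<V>" "a \<in> root_chain V (Suc n)"
  then show "inv a \<in> root_chain V (Suc n)"
    using nbhd_root_inv[OF root_chain_nbhd] by (simp add: root_chain_Suc)
qed

text \<open>The Urysohn function of the unit neighbourhood V, centred at h.\<close>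
definition bump :: "'g set \<Rightarrow> 'g \<Rightarrow> 'g set \<Rightarrow> real" where
  "bump V h C = nbhd_chain.pnorm G (root_chain V) (inv h \<otimes> lift C)"

lemma continuous_map_bump:
  assumes V: "V \<in> \<V>" and h: "h \<in> carrier G"
  shows "continuous_map TH euclideanreal (bump V h)"
proof (rule continuous_map_pointwiseI)
  interpret P: nbhd_chain G "root_chain V" using nbhd_chain_root_chain[OF V] .
  fix D U assume D: "D \<in> topspace TH" and U: "openin euclideanreal U" and DU: "bump V h D \<in> U"
  obtain e where e: "e > 0" "ball (bump V h D) e \<subseteq> U"
    using U DU by (force simp: open_contains_ball)
  obtain n where n: "(1/2::real) ^ n < e" using real_arch_pow_inv[OF e(1), of "1/2"] by auto
  define g where "g = lift D"
  have g: "g \<in> carrier G" "D = proj g" using lift D topspace_TH unfolding g_def by auto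
  have "bump V h D' \<in> U" if D': "D' \<in> basic_nbhd g (root_chain V (Suc n))" for D'
  proof -
    obtain v where v: "v \<in> root_chain V (Suc n)" "D' = proj (g \<otimes> v)"
      using basic_nbhd_elem[OF D'] by blast
    have vc: "v \<in> carrier G" using v(1) P.chain_subset by blast
    obtain m where m: "m \<in> N" "lift D' = g \<otimes> v \<otimes> m" using lift_proj g(1) vc v(2) by blast
    have mc: "m \<in> carrier G" using m(1) N_subset_carrier by blast
    have norm_m: "P.pnorm m = 0" "P.pnorm (inv m) = 0"
      using m(1) subgroup.m_inv_closed[OF subgroup_N m(1)] N_subset_nbhd root_chain_nbhd[OF V]
      by (blast intro: P.pnorm_eq_0)+
    have "P.pnorm (v \<otimes> m) \<le> (1/2) ^ Suc n"
      using P.pnorm_mult_le[OF vc mc] P.pnorm_chain_le[OF v(1)] norm_m by simp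
    moreover have "P.pnorm (inv (v \<otimes> m)) \<le> (1/2) ^ Suc n"
      using P.pnorm_mult_le[of "inv m" "inv v"] P.pnorm_chain_le[OF P.chain_inv[OF v(1)]] norm_m vc mc
      by (simp add: inv_mult_group)
    moreover have "(1/2::real) ^ Suc n < e"
      using power_decreasing[of n "Suc n" "1/2::real"] n by linarith
    ultimately have "\<bar>P.pnorm (inv h \<otimes> g \<otimes> (v \<otimes> m)) - P.pnorm (inv h \<otimes> g)\<bar> < e"
      using P.pnorm_mult_diff_le[of "inv h \<otimes> g" "v \<otimes> m"] h g(1) vc mc by simp
    moreover have "inv h \<otimes> g \<otimes> (v \<otimes> m) = inv h \<otimes> lift D'" using m(2) h g(1) vc mc by (simp add: m_assoc)
    ultimately have "dist (bump V h D') (bump V h D) < e"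
      unfolding bump_def g_def dist_real_def by simp
    then show ?thesis using e(2) by (auto simp: dist_commute)
  qed
  then show "\<exists>W. openin TH W \<and> D \<in> W \<and> (\<forall>D'\<in>W. bump V h D' \<in> U)"
    using openin_basic_nbhd proj_mem_basic_nbhd[OF g(1) root_chain_nbhd[OF V]] g(2) by blast
qed simp


lemma bump_proj_self: "V \<in> \<V> \<Longrightarrow> h \<in> carrier G \<Longrightarrow> bump V h (proj h) = 0"
proof -
  assume V: "V \<in> \<V>" and h: "h \<in> carrier G"
  interpret P: nbhd_chain G "root_chain V" using nbhd_chain_root_chain[OF V] .
  obtain m where "m \<in> N" "lift (proj h) = h \<otimes> m" using lift_proj[OF h] by blast
  moreover have "inv h \<otimes> (h \<otimes> m) = m" using calculation(1) h N_subset_carrier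
    by (simp add: m_assoc[symmetric] subset_iff)
  ultimately show ?thesis
    unfolding bump_def using N_subset_nbhd root_chain_nbhd[OF V] by (auto intro: P.pnorm_eq_0)
qed

lemma bump_less_one_imp:
  assumes V: "V \<in> \<V>" and h: "h \<in> carrier G" and C: "C \<in> carrier H" and "bump V h C < 1"
  shows "\<exists>v\<in>V. C = proj (h \<otimes> v)"
proof -
  interpret P: nbhd_chain G "root_chain V" using nbhd_chain_root_chain[OF V] .
  have "inv h \<otimes> lift C \<in> V"
    using P.pnorm_less_one_imp_mem assms(4) unfolding bump_def by (simp add: root_chain_def)
  moreover have "C = proj (h \<otimes> (inv h \<otimes> lift C))"
    using lift[OF C] h by (simp add: mult_inv_cancel_left)
  ultimately show ?thesis by blast
qed

lemma completely_regular_space_TH: "completely_regular_space TH"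
  unfolding completely_regular_space_def
proof (intro allI impI, elim conjE)
  fix Z C assume Z: "closedin TH Z" and C: "C \<in> topspace TH - Z"
  have "C \<in> carrier H" using C topspace_TH by blast
  then obtain h where h: "h \<in> carrier G" "C = proj h" using carrier_H_elem by blast
  have "openin TH (topspace TH - Z)" using Z by (simp add: closedin_def)
  moreover have "proj h \<in> topspace TH - Z" using C h(2) by simp
  ultimately obtain V where V: "V \<in> \<V>" "\<forall>v\<in>V. proj (h \<otimes> v) \<in> topspace TH - Z"
    using openin_TH_nbhd[OF _ h(1)] by blast
  have Z_sub: "Z \<subseteq> carrier H" using closedin_subset[OF Z] unfolding topspace_TH .
  interpret P: nbhd_chain G "root_chain V" using nbhd_chain_root_chain[OF V(1)] .
  have "bump V h D = 1" if D: "D \<in> Z" for D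
  proof -
    have "\<not> bump V h D < 1"
    proof
      assume "bump V h D < 1"
      then obtain v where "v \<in> V" "D = proj (h \<otimes> v)"
        using bump_less_one_imp[OF V(1) h(1)] D Z_sub by blast
      then have "D \<notin> Z" using V(2) by simp
      then show False using D by contradiction
    qed
    moreover have "bump V h D \<le> 1" unfolding bump_def by (rule P.pnorm_le_one)
    ultimately show ?thesis by linarith
  qed
  then have Z_one: "bump V h ` Z \<subseteq> {1}" by blast
  have "bump V h \<in> topspace TH \<rightarrow> {0..1}"
    unfolding bump_def using P.pnorm_nonneg P.pnorm_le_one by auto
  then have cont: "continuous_map TH (top_of_set {0..1}) (bump V h)"
    by (rule continuous_map_into_subtopology[OF continuous_map_bump[OF V(1) h(1)]])
  have C_zero: "bump V h C = 0" using bump_proj_self[OF V(1) h(1)] h(2) by simp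
  show "\<exists>f :: 'g set \<Rightarrow> real. continuous_map TH (top_of_set {0..1}) f \<and> f C = 0 \<and> f ` Z \<subseteq> {1}"
    using cont C_zero Z_one by blast
qed

lemma tychonoff_space_TH: "tychonoff_space TH"
  unfolding tychonoff_space_def using t1_space_TH completely_regular_space_TH by blast

subsection \<open>Cardinal invariants of the quotient\<close>

lemma character_le_TH:
  assumes "card_le \<V> K" and "infinite K"
  shows "character_le TH K"
  unfolding character_le_def
proof (intro conjI ballI assms(2))
  fix C assume "C \<in> topspace TH"
  then obtain g where g: "g \<in> carrier G" "C = proj g" using topspace_TH carrier_H_elem by auto
  have "local_base_at TH C (basic_nbhd g ` \<V>)"
    unfolding local_base_at_def
  proof (intro conjI ballI allI impI)
    fix B assume "B \<in> basic_nbhd g ` \<V>"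
    then obtain V where "V \<in> \<V>" "B = basic_nbhd g V" by blast
    then show "openin TH B" "C \<in> B" using openin_basic_nbhd proj_mem_basic_nbhd g by auto
  next
    fix U assume U: "openin TH U \<and> C \<in> U"
    then obtain V where "V \<in> \<V>" "basic_nbhd g V \<subseteq> U"
      using basic_nbhd_subset[OF _ g(1)] g(2) by blast
    then show "\<exists>B\<in>basic_nbhd g ` \<V>. B \<subseteq> U" by blast
  qed
  moreover have "card_le (basic_nbhd g ` \<V>) K"
    using assms(1) unfolding card_le_def by (rule card_of_image_ordLeq)
  ultimately show "\<exists>\<B>. local_base_at TH C \<B> \<and> card_le \<B> K" by blast
qed

lemma unit_nbhd_preimage:
  assumes U: "unit_nbhd H TH U"
  shows "unit_nbhd G T (carrier G \<inter> proj -` U)"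
proof -
  obtain W where W: "openin TH W" "\<one>\<^bsub>H\<^esub> \<in> W" "W \<subseteq> U" using U unfolding unit_nbhd_def by blast
  have "openin T (carrier G \<inter> proj -` W)"
    using W(1) coarse_open_imp_openin unfolding openin_TH by blast
  moreover have "proj \<one> \<in> W" unfolding proj_one by (rule W(2))
  then have "\<one> \<in> carrier G \<inter> proj -` W" by blast
  moreover have "carrier G \<inter> proj -` W \<subseteq> carrier G \<inter> proj -` U" using W(3) by blast
  moreover have "carrier G \<inter> proj -` U \<subseteq> topspace T" unfolding topspace_eq by blast
  ultimately show ?thesis unfolding unit_nbhd_def by blast
qed

lemma ib_le_TH:
  assumes ib: "ib_le G T K"
  shows "ib_le H TH K"
  unfolding ib_le_def
proof (intro conjI allI impI)
  show "infinite K" using ib unfolding ib_le_def by blast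
next
  fix U assume U: "unit_nbhd H TH U"
  have Uc: "U \<subseteq> carrier H" using U unfolding unit_nbhd_def topspace_TH by blast
  obtain A where A: "A \<subseteq> carrier G" "card_le A K" "A <#> (carrier G \<inter> proj -` U) = carrier G"
    using ib unit_nbhd_preimage[OF U] unfolding ib_le_def by blast
  have "proj ` A <#>\<^bsub>H\<^esub> U = carrier H"
  proof (intro equalityI subsetI)
    fix E assume "E \<in> proj ` A <#>\<^bsub>H\<^esub> U"
    then obtain a D where "a \<in> A" "D \<in> U" "E = proj a \<otimes>\<^bsub>H\<^esub> D" unfolding set_mult_def by blast
    moreover have "proj a \<in> carrier H" using \<open>a \<in> A\<close> A(1) proj_closed by blast
    moreover have "D \<in> carrier H" using \<open>D \<in> U\<close> Uc by blast
    ultimately show "E \<in> carrier H" by (simp only: H_mult_closed)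
  next
    fix E assume "E \<in> carrier H"
    then obtain g where g: "g \<in> carrier G" "E = proj g" using carrier_H_elem by blast
    have "g \<in> A <#> (carrier G \<inter> proj -` U)" using A(3) g(1) by simp
    then obtain a u where au: "a \<in> A" "u \<in> carrier G" "proj u \<in> U" "g = a \<otimes> u"
      unfolding set_mult_def by blast
    have "proj a \<otimes>\<^bsub>H\<^esub> proj u = proj (a \<otimes> u)" using au A(1) by (intro proj_mult) auto
    then have "E = proj a \<otimes>\<^bsub>H\<^esub> proj u" using g(2) au(4) by (simp only:)
    then show "E \<in> proj ` A <#>\<^bsub>H\<^esub> U" using au unfolding set_mult_def by blast
  qed
  moreover have "card_le (proj ` A) K"
    using A(2) unfolding card_le_def by (rule card_of_image_ordLeq)
  moreover have "proj ` A \<subseteq> carrier H" using A(1) proj_closed by blast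
  ultimately show "\<exists>A. A \<subseteq> carrier H \<and> card_le A K \<and> A <#>\<^bsub>H\<^esub> U = carrier H"
    by blast
qed


lemma basic_nbhd_between:
  assumes A: "\<And>V. V \<in> \<V> \<Longrightarrow> A V \<subseteq> carrier G \<and> A V <#> nbhd_root V = carrier G"
    and U: "openin TH U" and E: "E \<in> U"
  shows "\<exists>V\<in>\<V>. \<exists>a\<in>A V. E \<in> basic_nbhd a V \<and> basic_nbhd a V \<subseteq> U"
proof -
  have "E \<in> carrier H" using E openin_subset[OF U] unfolding topspace_TH by blast
  then obtain h where h: "h \<in> carrier G" "E = proj h" using carrier_H_elem by blast
  obtain V0 where V0: "V0 \<in> \<V>" "\<forall>v\<in>V0. proj (h \<otimes> v) \<in> U"
    using openin_TH_nbhd[OF U h(1)] E h(2) by blast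
  define V where "V = nbhd_root V0"
  have V: "V \<in> \<V>" unfolding V_def using nbhd_root_nbhd[OF V0(1)] .
  have W: "nbhd_root V \<in> \<V>" using nbhd_root_nbhd[OF V] .
  have "h \<in> A V <#> nbhd_root V" using A[OF V] h(1) by simp
  then obtain a w where aw: "a \<in> A V" "w \<in> nbhd_root V" "h = a \<otimes> w" unfolding set_mult_def by blast
  have ac: "a \<in> carrier G" using A[OF V] aw(1) by blast
  have wc: "w \<in> carrier G" using nbhd_mem_carrier[OF W aw(2)] .
  have "h \<otimes> u \<in> (\<lambda>v. a \<otimes> v) ` V" if u: "u \<in> nbhd_root V" for u
  proof (rule image_eqI)
    show "h \<otimes> u = a \<otimes> (w \<otimes> u)" using aw(3) ac wc nbhd_mem_carrier[OF W u] by (simp add: m_assoc)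
    show "w \<otimes> u \<in> V" using nbhd_root_square[OF V aw(2) u] .
  qed
  then have "h \<in> coarse_interior ((\<lambda>v. a \<otimes> v) ` V)" unfolding coarse_interior_def using h(1) W by blast
  then have "E \<in> basic_nbhd a V" unfolding basic_nbhd_def using h(2) by blast
  moreover have "basic_nbhd a V \<subseteq> U"
  proof
    fix D assume "D \<in> basic_nbhd a V"
    then obtain v where v: "v \<in> V" "D = proj (a \<otimes> v)" using basic_nbhd_elem by blast
    have vc: "v \<in> carrier G" using nbhd_mem_carrier[OF V v(1)] .
    have "inv w \<in> V" using nbhd_root_subset[OF V] nbhd_root_inv[OF V aw(2)] by blast
    then have "inv w \<otimes> v \<in> V0" using nbhd_root_square[OF V0(1)] v(1) unfolding V_def by blast
    then have "proj (h \<otimes> (inv w \<otimes> v)) \<in> U" using V0(2) by blast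
    moreover have "h \<otimes> (inv w \<otimes> v) = a \<otimes> v"
      using aw(3) ac wc vc by (simp add: m_assoc mult_inv_cancel_left)
    ultimately show "D \<in> U" using v(2) by simp
  qed
  ultimately show ?thesis using V aw(1) by blast
qed

lemma ex_nbhd_root_translates:
  assumes ib: "ib_le G T L"
  obtains A where "\<And>V. V \<in> \<V> \<Longrightarrow> A V \<subseteq> carrier G \<and> card_le (A V) L \<and> A V <#> nbhd_root V = carrier G"
proof -
  have ex: "\<forall>V\<in>\<V>. \<exists>A. A \<subseteq> carrier G \<and> card_le A L \<and> A <#> nbhd_root V = carrier G"
  proof
    fix V assume V: "V \<in> \<V>"
    have W: "nbhd_root V \<in> \<V>" using nbhd_root_nbhd[OF V] .
    have "unit_nbhd G T (nbhd_root V)"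
      using open_unit_nbhd_imp_unit_nbhd[OF openin_nbhd[OF W] one_mem_nbhd[OF W]] .
    then show "\<exists>A. A \<subseteq> carrier G \<and> card_le A L \<and> A <#> nbhd_root V = carrier G"
      using ib unfolding ib_le_def by blast
  qed
  show ?thesis using bchoice[OF ex] that by blast
qed

lemma weight_le_TH:
  assumes VK: "card_le \<V> K" and K: "infinite K" and ib: "ib_le G T L" and LK: "card_le L K"
  shows "weight_le TH K"
proof -
  obtain A where A: "\<And>V. V \<in> \<V> \<Longrightarrow> A V \<subseteq> carrier G \<and> card_le (A V) L \<and> A V <#> nbhd_root V = carrier G"
    using ex_nbhd_root_translates[OF ib] by blast
  then have cover: "\<And>V. V \<in> \<V> \<Longrightarrow> A V \<subseteq> carrier G \<and> A V <#> nbhd_root V = carrier G" by blast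
  define \<B> where "\<B> = (\<Union>V\<in>\<V>. (\<lambda>a. basic_nbhd a V) ` A V)"
  have "\<forall>B\<in>\<B>. openin TH B" unfolding \<B>_def using openin_basic_nbhd by blast
  moreover have "\<exists>\<C>\<subseteq>\<B>. \<Union>\<C> = U" if U: "openin TH U" for U
  proof (intro exI[of _ "{B\<in>\<B>. B \<subseteq> U}"] conjI)
    have "E \<in> \<Union>{B\<in>\<B>. B \<subseteq> U}" if E: "E \<in> U" for E
    proof -
      obtain V a where "V \<in> \<V>" "a \<in> A V" "E \<in> basic_nbhd a V" "basic_nbhd a V \<subseteq> U"
        using basic_nbhd_between[OF cover U E] by blast
      then show ?thesis unfolding \<B>_def by blast
    qed
    then show "\<Union>{B\<in>\<B>. B \<subseteq> U} = U" by blast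
  qed blast
  moreover have "card_le \<B> K" unfolding card_le_def \<B>_def
  proof (rule card_of_UNION_ordLeq_infinite[OF K])
    show "|\<V>| \<le>o |K|" using VK unfolding card_le_def .
    show "\<forall>V\<in>\<V>. |(\<lambda>a. basic_nbhd a V) ` A V| \<le>o |K|"
      using A LK unfolding card_le_def by (blast intro: card_of_image_ordLeq ordLeq_transitive)
  qed
  ultimately show ?thesis unfolding weight_le_def using K by blast
qed

end

section \<open>Group actions\<close>

locale gspace = topgroup G T for G (structure) and T +
  fixes X :: "'x topology" and \<alpha> :: "'g \<Rightarrow> 'x \<Rightarrow> 'x"
  assumes G_space: "G_space G T X \<alpha>"
begin

lemma continuous_map_action: "continuous_map (prod_topology T X) X (\<lambda>(g, x). \<alpha> g x)"
  using G_space unfolding G_space_def by blast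

lemma action_one: "y \<in> topspace X \<Longrightarrow> \<alpha> \<one> y = y"
  using G_space unfolding G_space_def by blast

lemma action_mult: "g \<in> carrier G \<Longrightarrow> h \<in> carrier G \<Longrightarrow> y \<in> topspace X \<Longrightarrow> \<alpha> (g \<otimes> h) y = \<alpha> g (\<alpha> h y)"
  using G_space unfolding G_space_def by blast

lemma action_closed:
  assumes "g \<in> carrier G" "y \<in> topspace X"
  shows "\<alpha> g y \<in> topspace X"
proof -
  have "(g, y) \<in> topspace (prod_topology T X)" using assms topspace_eq by simp
  then show ?thesis using continuous_map_image_subset_topspace[OF continuous_map_action] by force
qed

lemma continuous_map_action_left:
  assumes "g \<in> carrier G"
  shows "continuous_map X X (\<alpha> g)"
proof -
  have "continuous_map X (prod_topology T X) (\<lambda>z. (g, z))"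
    using assms topspace_eq by (auto intro!: continuous_map_pairedI)
  from continuous_map_compose[OF this continuous_map_action] show ?thesis by (simp add: o_def)
qed

lemma action_conjugate:
  assumes "g \<in> carrier G" "k \<in> carrier G" "v \<in> carrier G" "z \<in> topspace X"
  shows "\<alpha> (g \<otimes> k) (\<alpha> (inv k \<otimes> v \<otimes> k) (\<alpha> (inv k) z)) = \<alpha> (g \<otimes> v) z"
proof -
  have "\<alpha> (g \<otimes> k) (\<alpha> (inv k \<otimes> v \<otimes> k) (\<alpha> (inv k) z)) = \<alpha> (g \<otimes> k \<otimes> (inv k \<otimes> v \<otimes> k) \<otimes> inv k) z"
    using assms action_closed by (simp add: action_mult)
  also have "g \<otimes> k \<otimes> (inv k \<otimes> v \<otimes> k) \<otimes> inv k = g \<otimes> v"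
    using assms by (simp add: m_assoc mult_inv_cancel_left)
  finally show ?thesis .
qed

lemma action_inv_cancel: "g \<in> carrier G \<Longrightarrow> y \<in> topspace X \<Longrightarrow> \<alpha> (inv g) (\<alpha> g y) = y"
  using action_mult[of "inv g" g y] action_one by simp

end

text \<open>action_nbhd is continuity of the action for the coarse topology generated by \<V>.\<close>
locale quotient_action = nbhd_system G T \<V> + gspace G T X \<alpha>
  for G (structure) and T \<V> X \<alpha> +
  assumes transitive: "transitive_action G X \<alpha>"
    and N_acts_trivially: "m \<in> N \<Longrightarrow> y \<in> topspace X \<Longrightarrow> \<alpha> m y = y"
    and action_nbhd: "g \<in> carrier G \<Longrightarrow> y \<in> topspace X \<Longrightarrow> openin X U \<Longrightarrow> \<alpha> g y \<in> U \<Longrightarrow>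
       \<exists>V\<in>\<V>. \<exists>W. openin X W \<and> y \<in> W \<and> (\<forall>v\<in>V. \<forall>z\<in>W. \<alpha> (g \<otimes> v) z \<in> U)"
begin

definition qaction where
  "qaction C y = \<alpha> (lift C) y"

lemma qaction_proj:
  assumes a: "a \<in> carrier G" and y: "y \<in> topspace X"
  shows "qaction (proj a) y = \<alpha> a y"
proof -
  obtain m where m: "m \<in> N" "lift (proj a) = a \<otimes> m" using lift_proj[OF a] by blast
  have "m \<in> carrier G" using m(1) N_subset_carrier by blast
  then have "\<alpha> (a \<otimes> m) y = \<alpha> a y" using a y N_acts_trivially[OF m(1) y] by (simp add: action_mult)
  then show ?thesis unfolding qaction_def using m(2) by simp
qed

lemma continuous_map_qaction: "continuous_map (prod_topology TH X) X (\<lambda>(C, y). qaction C y)"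
proof (rule continuous_map_pointwiseI)
  fix p assume "p \<in> topspace (prod_topology TH X)"
  then show "(\<lambda>(C, y). qaction C y) p \<in> topspace X"
    using action_closed lift topspace_TH by (auto simp: qaction_def)
next
  fix p U assume p: "p \<in> topspace (prod_topology TH X)" and U: "openin X U"
    and pU: "(\<lambda>(C, y). qaction C y) p \<in> U"
  obtain C y where p_eq: "p = (C, y)" by (cases p)
  have C: "C \<in> carrier H" and y: "y \<in> topspace X" using p p_eq topspace_TH by auto
  define g where "g = lift C"
  have g: "g \<in> carrier G" "C = proj g" using lift[OF C] unfolding g_def by auto
  have "\<alpha> g y \<in> U" using pU p_eq unfolding qaction_def g_def by simp
  then obtain V W where V: "V \<in> \<V>" and W: "openin X W" "y \<in> W"
    and VW: "\<forall>v\<in>V. \<forall>z\<in>W. \<alpha> (g \<otimes> v) z \<in> U"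
    using action_nbhd[OF g(1) y U] by blast
  have "qaction D z \<in> U" if D: "D \<in> basic_nbhd g V" and z: "z \<in> W" for D z
  proof -
    obtain v where v: "v \<in> V" "D = proj (g \<otimes> v)" using basic_nbhd_elem[OF D] by blast
    have "z \<in> topspace X" using z openin_subset[OF W(1)] by blast
    then have "qaction D z = \<alpha> (g \<otimes> v) z" using v(2) qaction_proj g(1) nbhd_mem_carrier[OF V v(1)] by simp
    then show ?thesis using VW v(1) z by simp
  qed
  moreover have "openin (prod_topology TH X) (basic_nbhd g V \<times> W)"
    using openin_basic_nbhd W(1) by (rule openin_prod_Times_iff[THEN iffD2, OF disjI2, OF disjI2, OF conjI])
  moreover have "p \<in> basic_nbhd g V \<times> W" using p_eq g proj_mem_basic_nbhd[OF g(1) V] W(2) by simp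
  ultimately show "\<exists>O'. openin (prod_topology TH X) O' \<and> p \<in> O' \<and> (\<forall>q\<in>O'. (\<lambda>(C, y). qaction C y) q \<in> U)"
    by fast
qed

lemma G_space_H: "G_space H TH X qaction"
  unfolding G_space_def
proof (intro conjI ballI)
  show "topological_group H TH" by (rule topological_group_H)
  show "tychonoff_space TH" by (rule tychonoff_space_TH)
  show "tychonoff_space X" using G_space unfolding G_space_def by blast
  show "continuous_map (prod_topology TH X) X (\<lambda>(C, y). qaction C y)" by (rule continuous_map_qaction)
next
  fix y assume "y \<in> topspace X"
  then show "qaction \<one>\<^bsub>H\<^esub> y = y" using qaction_proj[OF one_closed] action_one proj_one by simp
next
  fix C D y assume "C \<in> carrier H" "D \<in> carrier H" and y: "y \<in> topspace X"
  then obtain a b where a: "a \<in> carrier G" "C = proj a" and b: "b \<in> carrier G" "D = proj b"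
    using carrier_H_elem by meson
  have "C \<otimes>\<^bsub>H\<^esub> D = proj (a \<otimes> b)" using a b proj_mult by simp
  then have "qaction (C \<otimes>\<^bsub>H\<^esub> D) y = \<alpha> a (\<alpha> b y)" using qaction_proj a b y by (simp add: action_mult)
  also have "\<dots> = qaction C (qaction D y)" using qaction_proj a b y action_closed by simp
  finally show "qaction (C \<otimes>\<^bsub>H\<^esub> D) y = qaction C (qaction D y)" .
qed

lemma transitive_action_H: "transitive_action H X qaction"
  unfolding transitive_action_def
proof (intro ballI equalityI subsetI)
  fix x z assume "x \<in> topspace X" "z \<in> (\<lambda>C. qaction C x) ` carrier H"
  then show "z \<in> topspace X" using action_closed lift by (auto simp: qaction_def)
next
  fix x z assume x: "x \<in> topspace X" and z: "z \<in> topspace X"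
  then obtain g where "g \<in> carrier G" "z = \<alpha> g x" using transitive unfolding transitive_action_def by blast
  then show "z \<in> (\<lambda>C. qaction C x) ` carrier H" using qaction_proj[OF _ x] proj_closed by force
qed

lemma equivariant_pair_proj: "equivariant_pair G T H TH X \<alpha> qaction proj"
  unfolding equivariant_pair_def using proj_hom continuous_map_proj qaction_proj by simp

end

section \<open>A small neighbourhood system for a transitive G-space\<close>

locale transitive_gspace = gspace G T X \<alpha>
  for G :: "('g, 'b) monoid_scheme" (structure) and T :: "'g topology"
    and X :: "'x topology" and \<alpha> :: "'g \<Rightarrow> 'x \<Rightarrow> 'x" +
  assumes transitive: "transitive_action G X \<alpha>"
begin

definition base_point :: 'x where
  "base_point = (SOME x. x \<in> topspace X)"

definition min_local_base :: "'x set set" where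
  "min_local_base = (SOME \<B>. local_base_at X base_point \<B> \<and>
     (\<forall>\<B>'. local_base_at X base_point \<B>' \<longrightarrow> |\<B>| \<le>o |\<B>'| ))"

definition acting_nbhd :: "'x set \<Rightarrow> 'g set" where
  "acting_nbhd O' = (SOME W. openin T W \<and> \<one> \<in> W \<and>
     (\<exists>O''. openin X O'' \<and> base_point \<in> O'' \<and> (\<forall>w\<in>W. \<forall>z\<in>O''. \<alpha> w z \<in> O')))"

definition cube_root :: "'g set \<Rightarrow> 'g set" where
  "cube_root V = (SOME W. openin T W \<and> \<one> \<in> W \<and> (\<forall>a\<in>W. \<forall>b\<in>W. \<forall>c\<in>W. a \<otimes> b \<otimes> c \<in> V))"

definition conj_cover :: "'g set \<Rightarrow> 'g set set \<Rightarrow> bool" where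
  "conj_cover V \<F> \<longleftrightarrow> (\<forall>W\<in>\<F>. openin T W \<and> \<one> \<in> W) \<and>
     (\<forall>x\<in>carrier G. \<exists>W\<in>\<F>. \<forall>w\<in>W. x \<otimes> w \<otimes> inv x \<in> V)"

definition min_conj_cover :: "'g set \<Rightarrow> 'g set set" where
  "min_conj_cover V = (SOME \<F>. conj_cover V \<F> \<and> (\<forall>\<F>'. conj_cover V \<F>' \<longrightarrow> |\<F>| \<le>o |\<F>'| ))"

definition closure_step :: "'g set set \<Rightarrow> 'g set set" where
  "closure_step \<S> = \<S> \<union> (\<lambda>(A, B). A \<inter> B) ` (\<S> \<times> \<S>) \<union> (\<lambda>V. (\<lambda>v. inv v) ` V) ` \<S> \<union>
     cube_root ` \<S> \<union> (\<Union>V\<in>\<S>. min_conj_cover V)"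

definition stage :: "nat \<Rightarrow> 'g set set" where
  "stage n = (closure_step ^^ n) (insert (carrier G) (acting_nbhd ` min_local_base))"

text \<open>The minimality of the local base and of the
  conjugation covers is what bounds the size of nbhds by chi(X) inv(G).\<close>
definition nbhds :: "'g set set" where
  "nbhds = (\<Union>n. stage n)"

lemma min_local_base:
  "local_base_at X base_point min_local_base \<and>
   (\<forall>\<B>'. local_base_at X base_point \<B>' \<longrightarrow> |min_local_base| \<le>o |\<B>'| )"
proof -
  have "local_base_at X base_point {O'. openin X O' \<and> base_point \<in> O'}"
    unfolding local_base_at_def by blast
  then show ?thesis unfolding min_local_base_def by (rule someI_ex[OF ex_card_of_minimal])
qed

lemma min_local_base_open: "O' \<in> min_local_base \<Longrightarrow> openin X O' \<and> base_point \<in> O'"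
  using min_local_base unfolding local_base_at_def by blast

lemma acting_nbhd:
  assumes "O' \<in> min_local_base"
  shows "openin T (acting_nbhd O') \<and> \<one> \<in> acting_nbhd O' \<and>
    (\<exists>O''. openin X O'' \<and> base_point \<in> O'' \<and> (\<forall>w\<in>acting_nbhd O'. \<forall>z\<in>O''. \<alpha> w z \<in> O'))"
  unfolding acting_nbhd_def
proof (rule someI_ex)
  have O': "openin X O'" "base_point \<in> O'" using min_local_base_open[OF assms] by auto
  have x0: "base_point \<in> topspace X" using openin_subset[OF O'(1)] O'(2) by blast
  define S where "S = {p \<in> topspace (prod_topology T X). (\<lambda>(g, x). \<alpha> g x) p \<in> O'}"
  have "openin (prod_topology T X) S"
    unfolding S_def using openin_continuous_map_preimage[OF continuous_map_action O'(1)] .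
  moreover have "(\<one>, base_point) \<in> S"
    unfolding S_def using x0 action_one[OF x0] O'(2) topspace_eq by simp
  ultimately obtain W O'' where WO: "openin T W" "openin X O''" "\<one> \<in> W" "base_point \<in> O''" "W \<times> O'' \<subseteq> S"
    unfolding openin_prod_topology_alt by meson
  have "\<forall>w\<in>W. \<forall>z\<in>O''. \<alpha> w z \<in> O'"
  proof (intro ballI)
    fix w z assume "w \<in> W" "z \<in> O''"
    then have "(w, z) \<in> S" using WO(5) by blast
    then show "\<alpha> w z \<in> O'" unfolding S_def by simp
  qed
  then show "\<exists>W. openin T W \<and> \<one> \<in> W \<and>
      (\<exists>O''. openin X O'' \<and> base_point \<in> O'' \<and> (\<forall>w\<in>W. \<forall>z\<in>O''. \<alpha> w z \<in> O'))"
    using WO by blast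
qed

lemma cube_root:
  assumes "openin T V" "\<one> \<in> V"
  shows "openin T (cube_root V) \<and> \<one> \<in> cube_root V \<and>
    (\<forall>a\<in>cube_root V. \<forall>b\<in>cube_root V. \<forall>c\<in>cube_root V. a \<otimes> b \<otimes> c \<in> V)"
proof -
  obtain W where "openin T W" "\<one> \<in> W" "\<forall>a\<in>W. \<forall>b\<in>W. \<forall>c\<in>W. a \<otimes> b \<otimes> c \<in> V"
    using open_unit_nbhd_symmetric_cube_root[OF assms] by blast
  then have "\<exists>W. openin T W \<and> \<one> \<in> W \<and> (\<forall>a\<in>W. \<forall>b\<in>W. \<forall>c\<in>W. a \<otimes> b \<otimes> c \<in> V)" by blast
  then show ?thesis unfolding cube_root_def by (rule someI_ex)
qed

lemma min_conj_cover:
  assumes V: "openin T V" "\<one> \<in> V"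
  shows "conj_cover V (min_conj_cover V) \<and> (\<forall>\<F>'. conj_cover V \<F>' \<longrightarrow> |min_conj_cover V| \<le>o |\<F>'| )"
proof -
  define Z where "Z x = {w \<in> carrier G. x \<otimes> w \<otimes> inv x \<in> V}" for x
  have "conj_cover V (Z ` carrier G)"
    unfolding conj_cover_def
  proof (intro conjI ballI)
    fix W assume "W \<in> Z ` carrier G"
    then obtain x where x: "x \<in> carrier G" "W = Z x" by blast
    show "openin T W" using openin_conjugate_preimage[OF x(1) V(1)] x(2) unfolding Z_def by simp
    show "\<one> \<in> W" using x V(2) unfolding Z_def by simp
  next
    fix x assume x: "x \<in> carrier G"
    have "\<forall>w\<in>Z x. x \<otimes> w \<otimes> inv x \<in> V" unfolding Z_def by simp
    then show "\<exists>W\<in>Z ` carrier G. \<forall>w\<in>W. x \<otimes> w \<otimes> inv x \<in> V" using x by blast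
  qed
  then show ?thesis unfolding min_conj_cover_def by (rule someI_ex[OF ex_card_of_minimal])
qed


lemma closure_step_open_unit:
  assumes "\<And>V. V \<in> \<S> \<Longrightarrow> openin T V \<and> \<one> \<in> V" and "V \<in> closure_step \<S>"
  shows "openin T V \<and> \<one> \<in> V"
proof -
  consider (old) "V \<in> \<S>" | (Int) A B where "A \<in> \<S>" "B \<in> \<S>" "V = A \<inter> B"
    | (inv) W where "W \<in> \<S>" "V = (\<lambda>v. inv v) ` W" | (root) W where "W \<in> \<S>" "V = cube_root W"
    | (conj) W where "W \<in> \<S>" "V \<in> min_conj_cover W"
    using assms(2) unfolding closure_step_def by blast
  then show ?thesis
  proof cases
    case old then show ?thesis using assms(1) by blast
  next
    case Int then show ?thesis using assms(1) by (auto intro: openin_Int)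
  next
    case inv
    have "\<one> \<in> V" using assms(1)[OF inv(1)] inv(2) by (auto intro!: image_eqI[of _ _ \<one>])
    then show ?thesis using openin_inv_image assms(1)[OF inv(1)] inv(2) by blast
  next
    case root then show ?thesis using cube_root assms(1) by blast
  next
    case conj then show ?thesis using min_conj_cover assms(1) unfolding conj_cover_def by blast
  qed
qed

lemma stage_Suc: "stage (Suc n) = closure_step (stage n)"
  by (simp add: stage_def)

lemma stage_open_unit: "V \<in> stage n \<Longrightarrow> openin T V \<and> \<one> \<in> V"
proof (induction n arbitrary: V)
  case 0
  then consider "V = carrier G" | O' where "O' \<in> min_local_base" "V = acting_nbhd O'"
    by (auto simp: stage_def)
  then show ?case
  proof cases
    case 1 then show ?thesis using openin_topspace[of T] unfolding topspace_eq by simp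
  next
    case 2 then show ?thesis using acting_nbhd by blast
  qed
next
  case (Suc n)
  then have "V \<in> closure_step (stage n)" by (simp add: stage_Suc)
  then show ?case using closure_step_open_unit[of "stage n"] Suc.IH by blast
qed

lemma nbhds_open_unit: "V \<in> nbhds \<Longrightarrow> openin T V \<and> \<one> \<in> V"
  unfolding nbhds_def using stage_open_unit by blast

lemma subset_closure_step: "\<S> \<subseteq> closure_step \<S>"
  unfolding closure_step_def by blast

lemma stage_mono: "m \<le> n \<Longrightarrow> stage m \<subseteq> stage n"
proof (induction n rule: dec_induct)
  case (step n)
  then show ?case using subset_closure_step[of "stage n"] stage_Suc by blast
qed simp

lemma closure_step_stage_subset: "closure_step (stage n) \<subseteq> nbhds"
  unfolding nbhds_def stage_Suc[symmetric] by blast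

lemma nbhds_two:
  assumes "A \<in> nbhds" "B \<in> nbhds"
  shows "\<exists>n. A \<in> stage n \<and> B \<in> stage n"
proof -
  obtain i j where "A \<in> stage i" "B \<in> stage j" using assms unfolding nbhds_def by blast
  then show ?thesis using stage_mono[of i "max i j"] stage_mono[of j "max i j"] by auto
qed

lemma closure_step_Int: "A \<in> \<S> \<Longrightarrow> B \<in> \<S> \<Longrightarrow> A \<inter> B \<in> closure_step \<S>"
proof -
  assume "A \<in> \<S>" "B \<in> \<S>"
  then have "A \<inter> B \<in> (\<lambda>(A, B). A \<inter> B) ` (\<S> \<times> \<S>)" by (intro rev_image_eqI[of "(A, B)"]) auto
  then show ?thesis unfolding closure_step_def by blast
qed

lemma closure_step_inv_image: "V \<in> \<S> \<Longrightarrow> (\<lambda>v. inv v) ` V \<in> closure_step \<S>"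
  unfolding closure_step_def by blast

lemma closure_step_cube_root: "V \<in> \<S> \<Longrightarrow> cube_root V \<in> closure_step \<S>"
  unfolding closure_step_def by blast

lemma closure_step_min_conj_cover: "V \<in> \<S> \<Longrightarrow> W \<in> min_conj_cover V \<Longrightarrow> W \<in> closure_step \<S>"
  unfolding closure_step_def by blast

lemma stage_closure_step_mem_nbhds: "V \<in> closure_step (stage n) \<Longrightarrow> V \<in> nbhds"
  using closure_step_stage_subset by blast

sublocale nbhd_system G T nbhds
proof unfold_locales
  fix V assume "V \<in> nbhds"
  then show "openin T V" "\<one> \<in> V" using nbhds_open_unit by auto
next
  fix A B assume "A \<in> nbhds" "B \<in> nbhds"
  then obtain n where "A \<in> stage n" "B \<in> stage n" using nbhds_two by blast
  then show "A \<inter> B \<in> nbhds" by (intro stage_closure_step_mem_nbhds closure_step_Int)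
next
  fix V assume "V \<in> nbhds"
  then obtain n where n: "V \<in> stage n" unfolding nbhds_def by blast
  then show "(\<lambda>v. inv v) ` V \<in> nbhds" by (intro stage_closure_step_mem_nbhds closure_step_inv_image)
  have "cube_root V \<in> nbhds" using n by (intro stage_closure_step_mem_nbhds closure_step_cube_root)
  moreover have "\<forall>a\<in>cube_root V. \<forall>b\<in>cube_root V. \<forall>c\<in>cube_root V. a \<otimes> b \<otimes> c \<in> V"
    using cube_root stage_open_unit[OF n] by blast
  ultimately show "\<exists>W\<in>nbhds. \<forall>a\<in>W. \<forall>b\<in>W. \<forall>c\<in>W. a \<otimes> b \<otimes> c \<in> V" by blast
next
  fix V x assume V: "V \<in> nbhds" and x: "x \<in> carrier G"
  then obtain n where n: "V \<in> stage n" unfolding nbhds_def by blast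
  have "conj_cover V (min_conj_cover V)" using min_conj_cover stage_open_unit[OF n] by blast
  then obtain W where W: "W \<in> min_conj_cover V" "\<forall>w\<in>W. x \<otimes> w \<otimes> inv x \<in> V"
    using x unfolding conj_cover_def by blast
  moreover have "W \<in> nbhds" using n W(1) by (intro stage_closure_step_mem_nbhds closure_step_min_conj_cover)
  ultimately show "\<exists>W\<in>nbhds. \<forall>w\<in>W. x \<otimes> w \<otimes> inv x \<in> V" by blast
next
  have "carrier G \<in> stage 0" by (simp add: stage_def)
  then show "carrier G \<in> nbhds" unfolding nbhds_def by blast
qed

lemma acting_nbhd_mem_nbhds: "O' \<in> min_local_base \<Longrightarrow> acting_nbhd O' \<in> nbhds"
proof -
  assume "O' \<in> min_local_base"
  then have "acting_nbhd O' \<in> stage 0" by (simp add: stage_def)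
  then show ?thesis unfolding nbhds_def by blast
qed


lemma N_fixes_base_point:
  assumes m: "m \<in> N" and x0: "base_point \<in> topspace X"
  shows "\<alpha> m base_point = base_point"
proof (rule ccontr)
  assume ne: "\<alpha> m base_point \<noteq> base_point"
  have "\<alpha> m base_point \<in> topspace X" using action_closed m N_subset_carrier x0 by blast
  moreover have "t1_space X" using G_space unfolding G_space_def tychonoff_space_def by blast
  ultimately obtain U where U: "openin X U" "base_point \<in> U" "\<alpha> m base_point \<notin> U"
    using x0 ne unfolding t1_space_def by metis
  then obtain O' where O': "O' \<in> min_local_base" "O' \<subseteq> U"
    using min_local_base unfolding local_base_at_def by blast
  obtain O'' where "base_point \<in> O''" "\<forall>w\<in>acting_nbhd O'. \<forall>z\<in>O''. \<alpha> w z \<in> O'"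
    using acting_nbhd[OF O'(1)] by blast
  moreover have "m \<in> acting_nbhd O'" using m N_subset_nbhd[OF acting_nbhd_mem_nbhds[OF O'(1)]] by blast
  ultimately have "\<alpha> m base_point \<in> O'" by blast
  then show False using O'(2) U(3) by blast
qed

text \<open>N fixes the base point, and N is normal while the action is transitive.\<close>
lemma N_acts_trivially:
  assumes m: "m \<in> N" and y: "y \<in> topspace X"
  shows "\<alpha> m y = y"
proof -
  have x0: "base_point \<in> topspace X" using y unfolding base_point_def by (rule someI)
  obtain k where k: "k \<in> carrier G" "y = \<alpha> k base_point"
    using transitive x0 y unfolding transitive_action_def by blast
  have mc: "m \<in> carrier G" using m N_subset_carrier by blast
  have "inv k \<otimes> m \<otimes> inv (inv k) \<in> N" using normal_N m k(1) unfolding normal_inv_iff by blast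
  then have j: "inv k \<otimes> m \<otimes> k \<in> N" using k(1) by simp
  have "\<alpha> m y = \<alpha> (k \<otimes> (inv k \<otimes> m \<otimes> k)) base_point"
    using k mc x0 by (simp add: action_mult m_assoc mult_inv_cancel_left)
  also have "\<dots> = \<alpha> k (\<alpha> (inv k \<otimes> m \<otimes> k) base_point)" using k(1) mc x0 by (simp add: action_mult)
  also have "\<dots> = y" using N_fixes_base_point[OF j x0] k(2) by simp
  finally show ?thesis .
qed

text \<open>Move to the base point: y = k x0, pull U back along g k to a neighbourhood of x0,
  shrink it to some O in the local base and conjugate acting_nbhd O by k.\<close>
lemma action_nbhd:
  assumes g: "g \<in> carrier G" and y: "y \<in> topspace X" and U: "openin X U" and gy: "\<alpha> g y \<in> U"
  shows "\<exists>V\<in>nbhds. \<exists>W. openin X W \<and> y \<in> W \<and> (\<forall>v\<in>V. \<forall>z\<in>W. \<alpha> (g \<otimes> v) z \<in> U)"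
proof -
  have x0: "base_point \<in> topspace X" using y unfolding base_point_def by (rule someI)
  obtain k where k: "k \<in> carrier G" "y = \<alpha> k base_point"
    using transitive x0 y unfolding transitive_action_def by blast
  have gk: "g \<otimes> k \<in> carrier G" using g k(1) by simp
  define U' where "U' = {z \<in> topspace X. \<alpha> (g \<otimes> k) z \<in> U}"
  have "openin X U'"
    unfolding U'_def using openin_continuous_map_preimage[OF continuous_map_action_left[OF gk] U] .
  moreover have "base_point \<in> U'" unfolding U'_def using x0 gy k g by (simp add: action_mult)
  ultimately obtain O' where O': "O' \<in> min_local_base" "O' \<subseteq> U'"
    using min_local_base unfolding local_base_at_def by blast
  obtain O'' where O'': "openin X O''" "base_point \<in> O''" "\<forall>w\<in>acting_nbhd O'. \<forall>z\<in>O''. \<alpha> w z \<in> O'"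
    using acting_nbhd[OF O'(1)] by blast
  obtain V where V: "V \<in> nbhds" "\<forall>v\<in>V. inv k \<otimes> v \<otimes> inv (inv k) \<in> acting_nbhd O'"
    using nbhd_conjugate[OF acting_nbhd_mem_nbhds[OF O'(1)], of "inv k"] k(1) by blast
  define W where "W = {z \<in> topspace X. \<alpha> (inv k) z \<in> O''}"
  have "openin X W"
    unfolding W_def using openin_continuous_map_preimage[OF continuous_map_action_left O''(1)] k(1) by simp
  moreover have "y \<in> W" unfolding W_def using y O''(2) action_inv_cancel[OF k(1) x0] k(2) by simp
  moreover have "\<alpha> (g \<otimes> v) z \<in> U" if v: "v \<in> V" and z: "z \<in> W" for v z
  proof -
    have vc: "v \<in> carrier G" using nbhd_mem_carrier[OF V(1) v] .
    have zX: "z \<in> topspace X" and z2: "\<alpha> (inv k) z \<in> O''" using z unfolding W_def by auto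
    have "inv k \<otimes> v \<otimes> k \<in> acting_nbhd O'" using V(2) v k(1) by simp
    then have "\<alpha> (inv k \<otimes> v \<otimes> k) (\<alpha> (inv k) z) \<in> U'" using O''(3) z2 O'(2) by blast
    then have "\<alpha> (g \<otimes> k) (\<alpha> (inv k \<otimes> v \<otimes> k) (\<alpha> (inv k) z)) \<in> U" unfolding U'_def by blast
    then show ?thesis using action_conjugate g k(1) vc zX by simp
  qed
  ultimately show ?thesis using V(1) by blast
qed

sublocale quotient_action G T nbhds X \<alpha>
  by unfold_locales (use transitive N_acts_trivially action_nbhd in blast)+


lemma card_min_conj_cover:
  assumes V: "openin T V" "\<one> \<in> V" and L: "inv_le G T L"
  shows "|min_conj_cover V| \<le>o |L|"
proof -
  obtain \<gamma> where \<gamma>: "\<forall>W\<in>\<gamma>. unit_nbhd G T W" "card_le \<gamma> L"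
      "\<forall>x\<in>carrier G. \<exists>W\<in>\<gamma>. (x <# W) #> inv x \<subseteq> V"
    using L open_unit_nbhd_imp_unit_nbhd[OF V] unfolding inv_le_def by blast
  have "conj_cover V ((\<lambda>W. T interior_of W) ` \<gamma>)"
    unfolding conj_cover_def
  proof (intro conjI ballI)
    fix W' assume "W' \<in> (\<lambda>W. T interior_of W) ` \<gamma>"
    then obtain W where W: "W \<in> \<gamma>" "W' = T interior_of W" by blast
    then show "openin T W'" by simp
    obtain W0 where "openin T W0" "\<one> \<in> W0" "W0 \<subseteq> W" using \<gamma>(1) W(1) unfolding unit_nbhd_def by blast
    then show "\<one> \<in> W'" using interior_of_maximal[of W0 W T] W(2) by blast
  next
    fix x assume "x \<in> carrier G"
    then obtain W where W: "W \<in> \<gamma>" "(x <# W) #> inv x \<subseteq> V" using \<gamma>(3) by blast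
    have "x \<otimes> w \<otimes> inv x \<in> V" if w: "w \<in> T interior_of W" for w
    proof -
      have "x \<otimes> w \<otimes> inv x \<in> (x <# W) #> inv x"
        using w interior_of_subset[of T W] unfolding l_coset_def r_coset_def by blast
      then show ?thesis using W(2) by blast
    qed
    then show "\<exists>W'\<in>(\<lambda>W. T interior_of W) ` \<gamma>. \<forall>w\<in>W'. x \<otimes> w \<otimes> inv x \<in> V"
      using W(1) by blast
  qed
  then have "|min_conj_cover V| \<le>o |(\<lambda>W. T interior_of W) ` \<gamma>|" using min_conj_cover[OF V] by blast
  moreover have "|(\<lambda>W. T interior_of W) ` \<gamma>| \<le>o |L|"
    using \<gamma>(2) unfolding card_le_def by (rule card_of_image_ordLeq)
  ultimately show ?thesis by (rule ordLeq_transitive)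
qed

lemma card_min_local_base:
  assumes "character_le X K"
  shows "|min_local_base| \<le>o |K|"
proof (cases "base_point \<in> topspace X")
  case True
  then obtain \<B> where \<B>: "local_base_at X base_point \<B>" "card_le \<B> K"
    using assms unfolding character_le_def by blast
  have "|min_local_base| \<le>o |\<B>|" using min_local_base \<B>(1) by blast
  then show ?thesis using \<B>(2) unfolding card_le_def by (rule ordLeq_transitive)
next
  case False
  have "min_local_base = {}"
  proof (rule equals0I)
    fix O' assume "O' \<in> min_local_base"
    then have "openin X O'" "base_point \<in> O'" using min_local_base_open by auto
    then show False using False openin_subset by blast
  qed
  then show ?thesis by (simp add: card_of_empty)
qed

lemma card_closure_step:
  assumes C: "infinite C" and S: "|\<S>| \<le>o |C|" and open_unit: "\<And>V. V \<in> \<S> \<Longrightarrow> openin T V \<and> \<one> \<in> V"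
    and L: "inv_le G T L" and LC: "|L| \<le>o |C|"
  shows "|closure_step \<S>| \<le>o |C|"
proof -
  have Int: "|(\<lambda>(A, B). A \<inter> B) ` (\<S> \<times> \<S>)| \<le>o |C|"
    using card_of_Times_ordLeq_infinite[OF C S S] by (rule card_of_image_ordLeq)
  have inv: "|(\<lambda>V. (\<lambda>v. inv v) ` V) ` \<S>| \<le>o |C|" using S by (rule card_of_image_ordLeq)
  have root: "|cube_root ` \<S>| \<le>o |C|" using S by (rule card_of_image_ordLeq)
  have conj: "|\<Union>V\<in>\<S>. min_conj_cover V| \<le>o |C|"
  proof (rule card_of_UNION_ordLeq_infinite[OF C S], intro ballI)
    fix V assume "V \<in> \<S>"
    then have "|min_conj_cover V| \<le>o |L|" using card_min_conj_cover[OF _ _ L] open_unit by blast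
    then show "|min_conj_cover V| \<le>o |C|" using LC by (rule ordLeq_transitive)
  qed
  show ?thesis
    unfolding closure_step_def by (intro card_of_Un_ordLeq_infinite[OF C] S Int inv root conj)
qed

lemma card_le_nbhds:
  assumes K: "character_le X K" and L: "inv_le G T L"
  shows "card_le nbhds (K \<times> L)"
proof -
  have "infinite K" "infinite L" using K L unfolding character_le_def inv_le_def by auto
  then have inf: "infinite (K \<times> L)" and K_ne: "K \<noteq> {}" and L_ne: "L \<noteq> {}"
    using infinite_cartesian_product by auto
  have KC: "|K| \<le>o |K \<times> L|" using card_of_Times1[OF L_ne] .
  have LC: "|L| \<le>o |K \<times> L|" using card_of_Times2[OF K_ne] .
  have "|stage n| \<le>o |K \<times> L|" for n
  proof (induction n)
    case 0
    have "|acting_nbhd ` min_local_base| \<le>o |K \<times> L|"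
      using ordLeq_transitive[OF card_min_local_base[OF K] KC] by (rule card_of_image_ordLeq)
    moreover have "stage 0 = insert (carrier G) (acting_nbhd ` min_local_base)" by (simp add: stage_def)
    ultimately show ?case using card_of_insert_ordLeq_infinite[OF inf] by simp
  next
    case (Suc n)
    have "\<And>V. V \<in> stage n \<Longrightarrow> openin T V \<and> \<one> \<in> V" using stage_open_unit .
    then show ?case unfolding stage_Suc using card_closure_step[OF inf Suc.IH _ L LC] by blast
  qed
  moreover have "|UNIV :: nat set| \<le>o |K \<times> L|" using inf infinite_iff_card_of_nat by blast
  ultimately have "|nbhds| \<le>o |K \<times> L|"
    unfolding nbhds_def by (intro card_of_UNION_ordLeq_infinite[OF inf]) auto
  then show ?thesis unfolding card_le_def .
qed

end

theorem theorem3p9: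
  fixes G :: "('g, 'b) monoid_scheme" and TG :: "'g topology"
    and X :: "'a topology" and \<alpha> :: "'g \<Rightarrow> 'a \<Rightarrow> 'a"
  assumes "G_space G TG X \<alpha>" and "transitive_action G X \<alpha>"
  shows "\<exists>(H :: 'g set monoid) (TH :: 'g set topology) (\<gamma> :: 'g set \<Rightarrow> 'a \<Rightarrow> 'a)
            (\<phi> :: 'g \<Rightarrow> 'g set).
           G_space H TH X \<gamma> \<and> transitive_action H X \<gamma> \<and>
           (\<forall>(K :: 'k set) (L :: 'l set). character_le X K \<and> inv_le G TG L
                \<longrightarrow> character_le TH (K \<times> L)) \<and>
           (\<forall>K :: 'k set. ib_le G TG K \<longrightarrow> ib_le H TH K) \<and>
           (\<forall>(K :: 'k set) (L :: 'l set). character_le X K \<and> ib_le G TG L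
                \<longrightarrow> weight_le TH (K \<times> L)) \<and>
           equivariant_pair G TG H TH X \<alpha> \<gamma> \<phi> \<and>
           \<phi> ` carrier G = carrier H"
proof -
  have "topgroup G TG" using assms(1) unfolding G_space_def by (blast intro: topological_group_imp_topgroup)
  then interpret transitive_gspace G TG X \<alpha>
    using assms by (intro transitive_gspace.intro gspace.intro gspace_axioms.intro transitive_gspace_axioms.intro)
  have card_Times: "infinite (K \<times> L)" "card_le L (K \<times> L)" if "character_le X K" "infinite L"
    for K :: "'k set" and L :: "'l set"
    using that card_of_Times2[of K L] infinite_cartesian_product[of K L]
    unfolding character_le_def card_le_def by auto
  show ?thesis
  proof (intro exI[of _ H] exI[of _ TH] exI[of _ qaction] exI[of _ proj] conjI allI impI)
    fix K :: "'k set" and L :: "'l set" assume "character_le X K \<and> inv_le G TG L"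
    then show "character_le TH (K \<times> L)"
      using character_le_TH card_le_nbhds card_Times unfolding inv_le_def by blast
  next
    fix K :: "'k set" and L :: "'l set" assume KL: "character_le X K \<and> ib_le G TG L"
    then have "inv_le G TG L" using ib_le_imp_inv_le by blast
    then show "weight_le TH (K \<times> L)"
      using weight_le_TH card_le_nbhds card_Times KL unfolding inv_le_def by blast
  qed (use G_space_H transitive_action_H ib_le_TH equivariant_pair_proj carrier_H in auto)
qed

end
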